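(* For every $n\in\{0,\dots,N\}$ and $\mu\in[\mu_m,\mu_M]$ the map $x\mapsto V^N(x,n,\mu)$ is convex on $(0,\infty)$. Moreover, there is $L>0$ independent of $(n,\mu)$ such that $|V^N(x,n,\mu)-V^N(y,n,\mu)|\le L|x-y|$ for all $x,y\in(0,\infty)$.
   Context: Let $(\Omega,\mathcal G,\mathsf P)$ support a standard Brownian motion $(B_t)_{t\ge0}$ and, independent of it, the mortality process described below. Fix $\theta>0$, $\alpha\ge0$, $\sigma>0$, $\rho>0$, $\nu\in[0,1]$, $K\in\mathbb R$, $\hat\rho>0$, $0<\mu_m\le\mu_M<\infty$, $\hat\mu\in[\mu_m,\mu_M]$, and assume $\theta-\alpha-\rho-\mu_m<0$. For $x>0$, $X_t=x\exp((\theta-\alpha-\sigma^2/2)t+\sigma B_t)$ solves $dX_t=(\theta-\alpha)X_tdt+\sigma X_tdB_t$, $X_0=x$. Mortality: fix $N\in\mathbb N_0$, rates $\lambda_1,\dots,\lambda_N\ge0$, set $\lambda_n=0$ for $n\ge N+1$, and for $n\le N-1$, $\mu\in[\mu_m,\mu_M]$ let $q(n,\mu,\cdot)$ be a Borel probability measure on $[\mu_m,\mu_M]$, measurable in $\mu$. The process $(n_t,\mu_t)$ started at $(n,\mu)$ stays at $(n,\mu)$ for an exponential time $\xi$ of rate $\lambda_{n+1}$ ($\xi=\infty$ if the rate is $0$), then jumps to $(n+1,Z)$ with $Z\sim q(n,\mu,\cdot)$ independent of $\xi$, and then evolves in the same way. Let $\mathbb F$ be the augmented filtration generated by $B$ and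 $(n_t,\mu_t)$, $\mathcal T(\mathbb F)$ its stopping times with values in $[0,\infty]$ (terms discounted at $\tau$ are $0$ on $\{\tau=\infty\}$), and $\mathsf E_{x,n,\mu}$ the expectation with $X_0=x$, $(n_0,\mu_0)=(n,\mu)$. Define $\hat f(n,\mu):=(\hat\rho+\hat\mu)\mathsf E_{n,\mu}[\int_0^\infty e^{-\rho u-\int_0^u\mu_sds}du]$ and $$V^N(x,n,\mu):=\sup_{\tau\in\mathcal T(\mathbb F)}\mathsf E_{x,n,\mu}\Big[\int_0^\tau e^{-\int_0^t(\rho+\mu_s)ds}(\alpha+\nu\mu_t)X_tdt+e^{-\int_0^\tau(\rho+\mu_s)ds}\hat f(n_\tau,\mu_\tau)(X_\tau-K)\Big].$$ *)

theory Defs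
  imports "HOL-Probability.Probability"
begin

definition std_BM :: "'a measure \<Rightarrow> (real \<Rightarrow> 'a \<Rightarrow> real) \<Rightarrow> bool" where
  "std_BM M B \<longleftrightarrow>
     (\<forall>t. B t \<in> borel_measurable M) \<and>
     (\<forall>\<omega>\<in>space M. B 0 \<omega> = 0 \<and> continuous_on {0..} (\<lambda>t. B t \<omega>)) \<and>
     (\<forall>(ts :: nat \<Rightarrow> real) k. 0 \<le> ts 0 \<and> (\<forall>i<k. ts i < ts (Suc i)) \<longrightarrow>
        prob_space.indep_vars M (\<lambda>_. borel) (\<lambda>i \<omega>. B (ts (Suc i)) \<omega> - B (ts i) \<omega>) {..<k} \<and>
        (\<forall>i<k. distributed M lborel (\<lambda>\<omega>. B (ts (Suc i)) \<omega> - B (ts i) \<omega>)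
                 (\<lambda>y. ennreal (normal_density 0 (sqrt (ts (Suc i) - ts i)) y))))"

definition gen_sets :: "'a measure \<Rightarrow> ('a \<Rightarrow> real) set \<Rightarrow> 'a set set" where
  "gen_sets M fs = {f -` A \<inter> space M | f A. f \<in> fs \<and> A \<in> sets borel}"

section \<open>The mortality process, built from i.i.d. Exp(1) clocks E and i.i.d. U(0,1) variables U\<close>

definition hold_time :: "(nat \<Rightarrow> real) \<Rightarrow> (nat \<Rightarrow> 'a \<Rightarrow> real) \<Rightarrow> nat \<Rightarrow> nat \<Rightarrow> 'a \<Rightarrow> ennreal" where
  "hold_time lam E n0 j \<omega> =
     (if lam (n0 + j + 1) = 0 then \<infinity> else ennreal (E j \<omega> / lam (n0 + j + 1)))"

definition jump_time :: "(nat \<Rightarrow> real) \<Rightarrow> (nat \<Rightarrow> 'a \<Rightarrow> real) \<Rightarrow> nat \<Rightarrow> nat \<Rightarrow> 'a \<Rightarrow> ennreal" where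
  "jump_time lam E n0 j \<omega> = (\<Sum>i<j. hold_time lam E n0 i \<omega>)"

definition njumps :: "(nat \<Rightarrow> real) \<Rightarrow> (nat \<Rightarrow> 'a \<Rightarrow> real) \<Rightarrow> nat \<Rightarrow> real \<Rightarrow> 'a \<Rightarrow> nat" where
  "njumps lam E n0 t \<omega> = card {j. 0 < j \<and> jump_time lam E n0 j \<omega> \<le> ennreal t}"

text \<open>Successive marks: the new mark after the j-th jump is G (n0+j) (old mark) (U j),
  where G k m applied to a U(0,1) variable has law q(k,m,.).\<close>
fun mark :: "(nat \<Rightarrow> real \<Rightarrow> real \<Rightarrow> real) \<Rightarrow> (nat \<Rightarrow> 'a \<Rightarrow> real) \<Rightarrow> nat \<Rightarrow> real \<Rightarrow> nat \<Rightarrow> 'a \<Rightarrow> real" where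
  "mark G U n0 m0 0 \<omega> = m0"
| "mark G U n0 m0 (Suc j) \<omega> = G (n0 + j) (mark G U n0 m0 j \<omega>) (U j \<omega>)"

definition mort_n :: "(nat \<Rightarrow> real) \<Rightarrow> (nat \<Rightarrow> 'a \<Rightarrow> real) \<Rightarrow> nat \<Rightarrow> real \<Rightarrow> 'a \<Rightarrow> nat" where
  "mort_n lam E n0 t \<omega> = n0 + njumps lam E n0 t \<omega>"

definition mort_mu :: "(nat \<Rightarrow> real) \<Rightarrow> (nat \<Rightarrow> 'a \<Rightarrow> real) \<Rightarrow> (nat \<Rightarrow> 'a \<Rightarrow> real)
    \<Rightarrow> (nat \<Rightarrow> real \<Rightarrow> real \<Rightarrow> real) \<Rightarrow> nat \<Rightarrow> real \<Rightarrow> real \<Rightarrow> 'a \<Rightarrow> real" where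
  "mort_mu lam E U G n0 m0 t \<omega> = mark G U n0 m0 (njumps lam E n0 t \<omega>) \<omega>"

definition filt :: "'a measure \<Rightarrow> (real \<Rightarrow> 'a \<Rightarrow> real) \<Rightarrow> (nat \<Rightarrow> real) \<Rightarrow> (nat \<Rightarrow> 'a \<Rightarrow> real)
    \<Rightarrow> (nat \<Rightarrow> 'a \<Rightarrow> real) \<Rightarrow> (nat \<Rightarrow> real \<Rightarrow> real \<Rightarrow> real) \<Rightarrow> nat \<Rightarrow> real \<Rightarrow> real \<Rightarrow> 'a measure" where
  "filt M B lam E U G n0 m0 t = sigma (space M)
     (gen_sets M ({B s | s. 0 \<le> s \<and> s \<le> t}
                  \<union> {(\<lambda>\<omega>. real (mort_n lam E n0 s \<omega>)) | s. 0 \<le> s \<and> s \<le> t}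
                  \<union> {mort_mu lam E U G n0 m0 s | s. 0 \<le> s \<and> s \<le> t})
      \<union> null_sets M)"

definition is_stopping_time :: "'a measure \<Rightarrow> (real \<Rightarrow> 'a measure) \<Rightarrow> ('a \<Rightarrow> ennreal) \<Rightarrow> bool" where
  "is_stopping_time M F \<tau> \<longleftrightarrow> (\<forall>t\<ge>0. {\<omega>\<in>space M. \<tau> \<omega> \<le> ennreal t} \<in> sets (F t))"

definition Xproc :: "real \<Rightarrow> real \<Rightarrow> real \<Rightarrow> (real \<Rightarrow> 'a \<Rightarrow> real) \<Rightarrow> real \<Rightarrow> real \<Rightarrow> 'a \<Rightarrow> real" where
  "Xproc \<theta> \<alpha> \<sigma> B x t \<omega> = x * exp ((\<theta> - \<alpha> - \<sigma>\<^sup>2 / 2) * t + \<sigma> * B t \<omega>)"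

definition disc :: "real \<Rightarrow> (real \<Rightarrow> real) \<Rightarrow> real \<Rightarrow> real" where
  "disc \<rho> mupath t = exp (- (\<rho> * t + (LBINT s:{0..t}. mupath s)))"

definition fhat :: "'a measure \<Rightarrow> real \<Rightarrow> real \<Rightarrow> real \<Rightarrow> (nat \<Rightarrow> real) \<Rightarrow> (nat \<Rightarrow> 'a \<Rightarrow> real)
    \<Rightarrow> (nat \<Rightarrow> 'a \<Rightarrow> real) \<Rightarrow> (nat \<Rightarrow> real \<Rightarrow> real \<Rightarrow> real) \<Rightarrow> nat \<Rightarrow> real \<Rightarrow> real" where
  "fhat M \<rho> \<rho>h \<mu>h lam E U G k m = (\<rho>h + \<mu>h) *
     (\<integral>\<omega>. (LBINT u:{0..}. disc \<rho> (\<lambda>s. mort_mu lam E U G k m s \<omega>) u) \<partial>M)"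

definition payoff :: "'a measure \<Rightarrow> (real \<Rightarrow> 'a \<Rightarrow> real) \<Rightarrow> (nat \<Rightarrow> real) \<Rightarrow> (nat \<Rightarrow> 'a \<Rightarrow> real)
    \<Rightarrow> (nat \<Rightarrow> 'a \<Rightarrow> real) \<Rightarrow> (nat \<Rightarrow> real \<Rightarrow> real \<Rightarrow> real)
    \<Rightarrow> real \<Rightarrow> real \<Rightarrow> real \<Rightarrow> real \<Rightarrow> real \<Rightarrow> real \<Rightarrow> real \<Rightarrow> real
    \<Rightarrow> real \<Rightarrow> nat \<Rightarrow> real \<Rightarrow> ('a \<Rightarrow> ennreal) \<Rightarrow> 'a \<Rightarrow> real" where
  "payoff M B lam E U G \<theta> \<alpha> \<sigma> \<rho> \<nu> K \<rho>h \<mu>h x n0 m0 \<tau> \<omega> =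
     (let mu = (\<lambda>s. mort_mu lam E U G n0 m0 s \<omega>);
          X = (\<lambda>s. Xproc \<theta> \<alpha> \<sigma> B x s \<omega>)
      in (LBINT t:{t. 0 \<le> t \<and> ennreal t < \<tau> \<omega>}. disc \<rho> mu t * (\<alpha> + \<nu> * mu t) * X t)
         + (if \<tau> \<omega> = \<infinity> then 0
            else (let s = enn2real (\<tau> \<omega>) in
                  disc \<rho> mu s * fhat M \<rho> \<rho>h \<mu>h lam E U G (mort_n lam E n0 s \<omega>) (mu s) * (X s - K))))"

definition VN :: "'a measure \<Rightarrow> (real \<Rightarrow> 'a \<Rightarrow> real) \<Rightarrow> (nat \<Rightarrow> real) \<Rightarrow> (nat \<Rightarrow> 'a \<Rightarrow> real)
    \<Rightarrow> (nat \<Rightarrow> 'a \<Rightarrow> real) \<Rightarrow> (nat \<Rightarrow> real \<Rightarrow> real \<Rightarrow> real)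
    \<Rightarrow> real \<Rightarrow> real \<Rightarrow> real \<Rightarrow> real \<Rightarrow> real \<Rightarrow> real \<Rightarrow> real \<Rightarrow> real
    \<Rightarrow> real \<Rightarrow> nat \<Rightarrow> real \<Rightarrow> ereal" where
  "VN M B lam E U G \<theta> \<alpha> \<sigma> \<rho> \<nu> K \<rho>h \<mu>h x n0 m0 =
     (SUP \<tau> \<in> {\<tau>. is_stopping_time M (filt M B lam E U G n0 m0) \<tau>}.
        ereal (\<integral>\<omega>. payoff M B lam E U G \<theta> \<alpha> \<sigma> \<rho> \<nu> K \<rho>h \<mu>h x n0 m0 \<tau> \<omega> \<partial>M))"

end

theory Submission
  imports Defs
begin

text \<open>For a fixed stopping rule the payoff is affine in the initial price, x * A + C, because
  X is linear in x. Hence V^N(., n, mu) is a supremum of affine functions of x: it is convex,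
  and it is Lipschitz with constant sup |E A| as soon as the coefficients are bounded uniformly
  in the stopping rule. Since the marks stay in [mu_m, mu_M] almost surely, the discount factor
  is at most exp (-(rho + mu_m) t), fhat is bounded, and A is dominated by a multiple of
  sup_t exp (-(rho + mu_m) t) X_t / x. Because theta - alpha < rho + mu_m, this supremum is at
  most sup_t exp (sigma B_t - p sigma^2 t / 2) for some p > 1, and Ville's maximal inequality
  for the exponential martingale exp (p sigma B_t - p^2 sigma^2 t / 2) bounds the probability
  that it exceeds c by c powr -p; so it is integrable.\<close>

section \<open>Suprema of affine functions\<close>

lemma SUP_affine_convex:
  fixes a c :: "'i \<Rightarrow> real"
  assumes "0 \<le> t" "t \<le> 1"
  shows "(SUP i\<in>I. ereal (a i * (t * x + (1 - t) * y) + c i))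
    \<le> ereal t * (SUP i\<in>I. ereal (a i * x + c i)) + ereal (1 - t) * (SUP i\<in>I. ereal (a i * y + c i))"
proof (rule SUP_least)
  fix i assume i: "i \<in> I"
  have "ereal (a i * (t * x + (1 - t) * y) + c i)
      = ereal t * ereal (a i * x + c i) + ereal (1 - t) * ereal (a i * y + c i)"
    by (simp add: algebra_simps)
  also have "\<dots> \<le> ereal t * (SUP i\<in>I. ereal (a i * x + c i)) + ereal (1 - t) * (SUP i\<in>I. ereal (a i * y + c i))"
    using assms i by (intro add_mono ereal_mult_left_mono SUP_upper) auto
  finally show "ereal (a i * (t * x + (1 - t) * y) + c i) \<le> \<dots>" .
qed

lemma SUP_affine_le_shift:
  fixes a c :: "'i \<Rightarrow> real"
  assumes "\<And>i. i \<in> I \<Longrightarrow> \<bar>a i\<bar> \<le> L"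
  shows "(SUP i\<in>I. ereal (a i * x + c i)) \<le> (SUP i\<in>I. ereal (a i * y + c i)) + ereal (L * \<bar>x - y\<bar>)"
proof (rule SUP_least)
  fix i assume i: "i \<in> I"
  have "a i * (x - y) \<le> \<bar>a i\<bar> * \<bar>x - y\<bar>"
    by (metis abs_ge_self abs_mult)
  also have "\<dots> \<le> L * \<bar>x - y\<bar>"
    using assms[OF i] by (intro mult_right_mono) auto
  finally have "ereal (a i * x + c i) \<le> ereal (a i * y + c i) + ereal (L * \<bar>x - y\<bar>)"
    by (simp add: algebra_simps)
  also have "\<dots> \<le> (SUP i\<in>I. ereal (a i * y + c i)) + ereal (L * \<bar>x - y\<bar>)"
    using i by (intro add_right_mono SUP_upper)
  finally show "ereal (a i * x + c i) \<le> \<dots>" .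
qed

lemma SUP_affine_finite:
  fixes a c :: "'i \<Rightarrow> real"
  assumes "I \<noteq> {}" "\<And>i. i \<in> I \<Longrightarrow> \<bar>a i\<bar> \<le> L" "\<And>i. i \<in> I \<Longrightarrow> \<bar>c i\<bar> \<le> C"
  shows "\<bar>SUP i\<in>I. ereal (a i * x + c i)\<bar> \<noteq> \<infinity>"
proof -
  obtain i where "i \<in> I" using assms(1) by blast
  then have lower: "ereal (a i * x + c i) \<le> (SUP i\<in>I. ereal (a i * x + c i))"
    by (rule SUP_upper)
  have "(SUP i\<in>I. ereal (a i * x + c i)) \<le> ereal (L * \<bar>x\<bar> + C)"
  proof (rule SUP_least)
    fix j assume j: "j \<in> I"
    have "a j * x \<le> \<bar>a j\<bar> * \<bar>x\<bar>" by (metis abs_ge_self abs_mult)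
    also have "\<dots> \<le> L * \<bar>x\<bar>" using assms(2)[OF j] by (intro mult_right_mono) auto
    finally show "ereal (a j * x + c j) \<le> ereal (L * \<bar>x\<bar> + C)"
      using assms(3)[OF j] by simp
  qed
  with lower show ?thesis by (cases "SUP i\<in>I. ereal (a i * x + c i)") auto
qed

lemma SUP_affine_lipschitz:
  fixes a c :: "'i \<Rightarrow> real"
  assumes "I \<noteq> {}" "\<And>i. i \<in> I \<Longrightarrow> \<bar>a i\<bar> \<le> L" "\<And>i. i \<in> I \<Longrightarrow> \<bar>c i\<bar> \<le> C"
  shows "\<bar>(SUP i\<in>I. ereal (a i * x + c i)) - (SUP i\<in>I. ereal (a i * y + c i))\<bar> \<le> ereal (L * \<bar>x - y\<bar>)"
proof -
  obtain u where u: "(SUP i\<in>I. ereal (a i * x + c i)) = ereal u"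
    using SUP_affine_finite[OF assms, where x=x] by force
  obtain v where v: "(SUP i\<in>I. ereal (a i * y + c i)) = ereal v"
    using SUP_affine_finite[OF assms, where x=y] by force
  have "u \<le> v + L * \<bar>x - y\<bar>"
    using SUP_affine_le_shift[of I a L x c y] assms(2) u v by simp
  moreover have "v \<le> u + L * \<bar>x - y\<bar>"
    using SUP_affine_le_shift[of I a L y c x] assms(2) u v by (simp add: abs_minus_commute)
  ultimately show ?thesis using u v by simp
qed

section \<open>Exponential decay and the discount factor\<close>

lemma has_bochner_integral_exp_neg:
  fixes c :: real
  assumes c: "0 < c"
  shows "has_bochner_integral lborel (\<lambda>u. indicator {0..} u * exp (- c * u)) (1 / c)"
proof (rule has_bochner_integral_nn_integral)
  show "(\<lambda>u. indicator {0..} u * exp (- c * u)) \<in> borel_measurable lborel" by measurable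
  show "AE x in lborel. 0 \<le> indicator {0..} x * exp (- c * x)" by simp
  show "0 \<le> 1 / c" using c by simp
  interpret P: prob_space "density lborel (exponential_density c)"
    using prob_space_exponential_density[OF c] .
  have "emeasure (density lborel (exponential_density c)) UNIV = 1"
    using P.emeasure_space_1 by simp
  then have one: "(\<integral>\<^sup>+x. ennreal (exponential_density c x) \<partial>lborel) = 1"
    by (subst (asm) emeasure_density) (auto simp: exponential_density_def)
  have "(\<integral>\<^sup>+x. ennreal (indicator {0..} x * exp (- c * x)) \<partial>lborel)
      = (\<integral>\<^sup>+x. ennreal (1 / c) * ennreal (exponential_density c x) \<partial>lborel)"
    using c by (intro nn_integral_cong)
      (auto simp: exponential_density_def indicator_def ennreal_mult[symmetric] mult_ac)
  also have "\<dots> = ennreal (1 / c) * (\<integral>\<^sup>+x. ennreal (exponential_density c x) \<partial>lborel)"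
    by (rule nn_integral_cmult) (auto simp: exponential_density_def)
  finally show "(\<integral>\<^sup>+x. ennreal (indicator {0..} x * exp (- c * x)) \<partial>lborel) = ennreal (1 / c)"
    using one by simp
qed

lemma set_integral_le_exp_decay:
  fixes f :: "real \<Rightarrow> real"
  assumes \<epsilon>: "0 < \<epsilon>" and C: "0 \<le> C" and S: "S \<subseteq> {0..}"
    and f: "\<And>t. t \<in> S \<Longrightarrow> f t \<le> C * exp (- \<epsilon> * t)"
  shows "(LBINT t:S. f t) \<le> C / \<epsilon>"
proof -
  have int: "has_bochner_integral lborel (\<lambda>t. C * (indicator {0..} t * exp (- \<epsilon> * t))) (C * (1 / \<epsilon>))"
    by (intro has_bochner_integral_mult_right has_bochner_integral_exp_neg \<epsilon>)
  have "(LBINT t:S. f t) \<le> (\<integral>t. C * (indicator {0..} t * exp (- \<epsilon> * t)) \<partial>lborel)"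
    unfolding set_lebesgue_integral_def
  proof (rule integral_mono')
    show "integrable lborel (\<lambda>t. C * (indicator {0..} t * exp (- \<epsilon> * t)))"
      using int by (rule integrable.intros)
    show "indicator S t *\<^sub>R f t \<le> C * (indicator {0..} t * exp (- \<epsilon> * t))" for t
      using S f[of t] C by (auto simp: indicator_def)
    show "0 \<le> C * (indicator {0..} t * exp (- \<epsilon> * t))" for t
      using C by simp
  qed
  also have "\<dots> = C * (1 / \<epsilon>)"
    using int by (rule has_bochner_integral_integral_eq)
  finally show ?thesis by simp
qed

lemma set_integral_nonneg_real:
  fixes f :: "real \<Rightarrow> real"
  assumes "\<And>t. t \<in> S \<Longrightarrow> 0 \<le> f t"
  shows "0 \<le> (LBINT t:S. f t)"
  unfolding set_lebesgue_integral_def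
  using assms by (intro integral_nonneg_AE AE_I2) (simp add: indicator_def)

lemma disc_nonneg: "0 \<le> disc r mup t"
  unfolding disc_def by simp

lemma disc_le_exp:
  fixes mup :: "real \<Rightarrow> real"
  assumes m: "mup \<in> borel_measurable borel" and ab: "\<And>s. a \<le> mup s" "\<And>s. mup s \<le> b"
    and t: "0 \<le> t"
  shows "disc r mup t \<le> exp (- (r + a) * t)"
proof -
  have "set_integrable lborel {0..t} mup"
    unfolding set_integrable_def
  proof (rule integrableI_bounded_set[where A="{0..t}" and B="max \<bar>a\<bar> \<bar>b\<bar>"])
    show "(\<lambda>x. indicator {0..t} x *\<^sub>R mup x) \<in> borel_measurable lborel" using m by measurable
    show "AE x in lborel. x \<in> {0..t} \<longrightarrow> norm (indicator {0..t} x *\<^sub>R mup x) \<le> max \<bar>a\<bar> \<bar>b\<bar>"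
    proof (intro AE_I2 impI)
      fix x assume "x \<in> {0..t}"
      have "\<bar>mup x\<bar> \<le> max \<bar>a\<bar> \<bar>b\<bar>"
        using ab(1)[of x] ab(2)[of x] by (simp add: abs_le_iff) linarith
      then show "norm (indicator {0..t} x *\<^sub>R mup x) \<le> max \<bar>a\<bar> \<bar>b\<bar>"
        using \<open>x \<in> {0..t}\<close> by simp
    qed
  qed (use t in \<open>auto simp: emeasure_lborel_Icc\<close>)
  moreover have "set_integrable lborel {0..t} (\<lambda>_. a)"
    unfolding set_integrable_def
    by (rule integrableI_bounded_set[where A="{0..t}" and B="\<bar>a\<bar>"])
       (use t in \<open>auto simp: indicator_def emeasure_lborel_Icc\<close>)
  ultimately have "(LBINT s:{0..t}. a) \<le> (LBINT s:{0..t}. mup s)"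
    using ab by (intro set_integral_mono) auto
  then have "a * t \<le> (LBINT s:{0..t}. mup s)"
    using t by (simp add: set_integral_const mult.commute)
  then show ?thesis unfolding disc_def by (simp add: algebra_simps)
qed

lemma disc_measurable_joint:
  fixes mup :: "'n \<Rightarrow> real \<Rightarrow> real"
  assumes "(\<lambda>x. mup (fst x) (snd x)) \<in> borel_measurable (Nm \<Otimes>\<^sub>M lborel)"
  shows "(\<lambda>x. disc r (mup (fst x)) (snd x)) \<in> borel_measurable (Nm \<Otimes>\<^sub>M lborel)"
proof -
  have [measurable]: "(\<lambda>y. mup (fst (fst y)) (snd y)) \<in> borel_measurable ((Nm \<Otimes>\<^sub>M lborel) \<Otimes>\<^sub>M lborel)"
    using measurable_compose[OF _ assms, of "\<lambda>y. (fst (fst y), snd y)" "(Nm \<Otimes>\<^sub>M lborel) \<Otimes>\<^sub>M lborel"]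
    by simp
  have "(\<lambda>y. indicator {0..snd (fst y)} (snd y) *\<^sub>R mup (fst (fst y)) (snd y) :: real)
      = (\<lambda>y. (if 0 \<le> snd y \<and> snd y \<le> snd (fst y) then 1 else 0) * mup (fst (fst y)) (snd y))"
    by (auto simp: indicator_def fun_eq_iff)
  also have "\<dots> \<in> borel_measurable ((Nm \<Otimes>\<^sub>M lborel) \<Otimes>\<^sub>M lborel)"
    by measurable
  finally have "(\<lambda>x. \<integral>s. indicator {0..snd x} s *\<^sub>R mup (fst x) s \<partial>lborel) \<in> borel_measurable (Nm \<Otimes>\<^sub>M lborel)"
    by (intro lborel.borel_measurable_lebesgue_integral) (simp add: case_prod_beta)
  then show ?thesis unfolding disc_def set_lebesgue_integral_def by measurable
qed

section \<open>Ville's inequality for products of independent factors\<close>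

lemma (in prob_space) indep_var_nn_integral:
  fixes X Y :: "'a \<Rightarrow> ennreal"
  assumes "indep_var borel X borel Y"
  shows "(\<integral>\<^sup>+\<omega>. X \<omega> * Y \<omega> \<partial>M) = (\<integral>\<^sup>+\<omega>. X \<omega> \<partial>M) * (\<integral>\<^sup>+\<omega>. Y \<omega> \<partial>M)"
proof -
  have borel_eq: "(\<lambda>_::bool. borel) = case_bool borel borel"
    by (simp add: fun_eq_iff split: bool.split)
  have "indep_vars (\<lambda>_. borel) (case_bool X Y) UNIV"
    unfolding borel_eq using assms unfolding indep_var_def .
  then have "(\<integral>\<^sup>+\<omega>. (\<Prod>i\<in>UNIV. case_bool X Y i \<omega>) \<partial>M) = (\<Prod>i\<in>UNIV. \<integral>\<^sup>+\<omega>. case_bool X Y i \<omega> \<partial>M)"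
    by (intro indep_vars_nn_integral) auto
  then show ?thesis
    by (simp add: UNIV_bool mult.commute)
qed

lemma (in prob_space) nn_integral_indep_last_factor:
  assumes ind: "indep_vars (\<lambda>_. borel) W {..<Suc K}"
    and f: "f \<in> borel_measurable (PiM {..<K} (\<lambda>_. borel))"
  shows "(\<integral>\<^sup>+\<omega>. f (restrict (\<lambda>i. W i \<omega>) {..<K}) * ennreal (W K \<omega>) \<partial>M)
    = (\<integral>\<^sup>+\<omega>. f (restrict (\<lambda>i. W i \<omega>) {..<K}) \<partial>M) * (\<integral>\<^sup>+\<omega>. ennreal (W K \<omega>) \<partial>M)"
proof -
  have restricts: "indep_var (PiM {..<K} (\<lambda>_. borel)) (\<lambda>\<omega>. restrict (\<lambda>i. W i \<omega>) {..<K})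
      (PiM {K} (\<lambda>_. borel)) (\<lambda>\<omega>. restrict (\<lambda>i. W i \<omega>) {K})"
    by (rule indep_var_restrict[OF ind]) auto
  have last: "(\<lambda>v. ennreal (v K)) \<in> borel_measurable (PiM {K} (\<lambda>_. borel::real measure))"
    by measurable
  have "indep_var borel (f \<circ> (\<lambda>\<omega>. restrict (\<lambda>i. W i \<omega>) {..<K}))
      borel ((\<lambda>v. ennreal (v K)) \<circ> (\<lambda>\<omega>. restrict (\<lambda>i. W i \<omega>) {K}))"
    using indep_var_compose[OF restricts f last] .
  then show ?thesis
    by (subst indep_var_nn_integral) (simp_all add: comp_def)
qed

definition partial_prod_exceeds :: "'a measure \<Rightarrow> (nat \<Rightarrow> 'a \<Rightarrow> real) \<Rightarrow> real \<Rightarrow> nat \<Rightarrow> 'a set" where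
  "partial_prod_exceeds M W l K = {\<omega>\<in>space M. \<exists>j\<le>K. l < (\<Prod>i<j. W i \<omega>)}"

lemma partial_prod_exceeds_measurable[measurable]:
  assumes "\<And>i. W i \<in> borel_measurable M"
  shows "partial_prod_exceeds M W l K \<in> sets M"
proof -
  have "partial_prod_exceeds M W l K = (\<Union>j\<in>{..K}. {\<omega>\<in>space M. l < (\<Prod>i<j. W i \<omega>)})"
    by (auto simp: partial_prod_exceeds_def)
  also have "\<dots> \<in> sets M"
    using assms by (intro sets.finite_UN) auto
  finally show ?thesis .
qed

lemma partial_prod_exceeds_Suc:
  "partial_prod_exceeds M W l (Suc K)
    = partial_prod_exceeds M W l K \<union> {\<omega>\<in>space M. l < (\<Prod>i<Suc K. W i \<omega>)}"
  by (auto simp: partial_prod_exceeds_def le_Suc_eq)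

lemma (in prob_space) nn_integral_prod_Suc_on_exceeds:
  assumes ind: "indep_vars (\<lambda>_. borel) W {..<Suc K}"
    and nn: "\<And>i \<omega>. 0 \<le> W i \<omega>"
    and mean: "(\<integral>\<^sup>+\<omega>. ennreal (W K \<omega>) \<partial>M) = 1"
  shows "(\<integral>\<^sup>+\<omega>. ennreal (\<Prod>i<Suc K. W i \<omega>) * indicator (partial_prod_exceeds M W l K) \<omega> \<partial>M)
    = (\<integral>\<^sup>+\<omega>. ennreal (\<Prod>i<K. W i \<omega>) * indicator (partial_prod_exceeds M W l K) \<omega> \<partial>M)"
proof -
  define f where "f v = ennreal (\<Prod>i<K. v i) * indicator {v. \<exists>j\<le>K. l < (\<Prod>i<j. v i)} v"
    for v :: "nat \<Rightarrow> real"
  have f_meas: "f \<in> borel_measurable (PiM {..<K} (\<lambda>_. borel))"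
  proof -
    have [measurable]: "(\<lambda>v. \<Prod>i<j. v i) \<in> borel_measurable (PiM {..<K} (\<lambda>_. borel::real measure))"
      if "j \<le> K" for j
      using that by (intro borel_measurable_prod) auto
    have "{v \<in> space (PiM {..<K} (\<lambda>_. borel)). \<exists>j\<le>K. l < (\<Prod>i<j. v i)}
       = (\<Union>j\<in>{..K}. {v \<in> space (PiM {..<K} (\<lambda>_. borel)). l < (\<Prod>i<j. v i)})"
      by auto
    also have "\<dots> \<in> sets (PiM {..<K} (\<lambda>_. borel::real measure))"
      by (intro sets.finite_UN) auto
    finally show ?thesis
      unfolding f_def by (intro borel_measurable_times_ennreal borel_measurable_indicator') auto
  qed
  have f_eq: "f (restrict (\<lambda>i. W i \<omega>) {..<K}) = ennreal (\<Prod>i<K. W i \<omega>) * indicator (partial_prod_exceeds M W l K) \<omega>"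
    if "\<omega> \<in> space M" for \<omega>
    using that by (auto simp: f_def partial_prod_exceeds_def indicator_def intro!: prod.cong)
  have "(\<integral>\<^sup>+\<omega>. ennreal (\<Prod>i<Suc K. W i \<omega>) * indicator (partial_prod_exceeds M W l K) \<omega> \<partial>M)
      = (\<integral>\<^sup>+\<omega>. f (restrict (\<lambda>i. W i \<omega>) {..<K}) * ennreal (W K \<omega>) \<partial>M)"
    using nn by (intro nn_integral_cong) (simp add: f_eq ennreal_mult' prod_nonneg mult_ac)
  also have "\<dots> = (\<integral>\<^sup>+\<omega>. f (restrict (\<lambda>i. W i \<omega>) {..<K}) \<partial>M) * (\<integral>\<^sup>+\<omega>. ennreal (W K \<omega>) \<partial>M)"
    by (rule nn_integral_indep_last_factor[OF ind f_meas])
  also have "\<dots> = (\<integral>\<^sup>+\<omega>. ennreal (\<Prod>i<K. W i \<omega>) * indicator (partial_prod_exceeds M W l K) \<omega> \<partial>M)"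
    using mean by (simp add: f_eq cong: nn_integral_cong)
  finally show ?thesis .
qed

text \<open>The induction proves the stronger bound l P(V_K) <= E[W_0 ... W_(K-1); V_K], where V_K is
  the event that some partial product up to K exceeds l: the discrete form of optional stopping
  for the product martingale.\<close>

lemma (in prob_space) ville_inequality_discrete_strong:
  assumes ind: "indep_vars (\<lambda>_. borel) W {..<K}"
    and nn: "\<And>i \<omega>. 0 \<le> W i \<omega>"
    and mean: "\<And>i. i < K \<Longrightarrow> (\<integral>\<^sup>+\<omega>. ennreal (W i \<omega>) \<partial>M) = 1"
    and rv[measurable]: "\<And>i. W i \<in> borel_measurable M"
  shows "ennreal l * emeasure M (partial_prod_exceeds M W l K)
     \<le> (\<integral>\<^sup>+\<omega>. ennreal (\<Prod>i<K. W i \<omega>) * indicator (partial_prod_exceeds M W l K) \<omega> \<partial>M)"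
  using ind mean
proof (induction K)
  case 0
  have "ennreal l * emeasure M (partial_prod_exceeds M W l 0)
      = (\<integral>\<^sup>+\<omega>. ennreal l * indicator (partial_prod_exceeds M W l 0) \<omega> \<partial>M)"
    by (simp add: nn_integral_cmult_indicator)
  also have "\<dots> \<le> (\<integral>\<^sup>+\<omega>. ennreal (\<Prod>i<0. W i \<omega>) * indicator (partial_prod_exceeds M W l 0) \<omega> \<partial>M)"
    by (intro nn_integral_mono) (auto simp: partial_prod_exceeds_def indicator_def)
  finally show ?case .
next
  case (Suc K)
  define V where "V = partial_prod_exceeds M W l K"
  define D where "D = partial_prod_exceeds M W l (Suc K) - V"
  have [measurable]: "V \<in> sets M" "D \<in> sets M"
    unfolding V_def D_def by measurable
  have VD: "partial_prod_exceeds M W l (Suc K) = V \<union> D" "V \<inter> D = {}"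
    by (auto simp: D_def V_def partial_prod_exceeds_Suc)
  have "ennreal l * emeasure M V \<le> (\<integral>\<^sup>+\<omega>. ennreal (\<Prod>i<K. W i \<omega>) * indicator V \<omega> \<partial>M)"
    unfolding V_def using Suc.prems by (intro Suc.IH) (auto intro: indep_vars_subset)
  also have "\<dots> = (\<integral>\<^sup>+\<omega>. ennreal (\<Prod>i<Suc K. W i \<omega>) * indicator V \<omega> \<partial>M)"
    unfolding V_def using Suc.prems nn by (intro nn_integral_prod_Suc_on_exceeds[symmetric]) auto
  finally have stopped_V: "ennreal l * emeasure M V
      \<le> (\<integral>\<^sup>+\<omega>. ennreal (\<Prod>i<Suc K. W i \<omega>) * indicator V \<omega> \<partial>M)" .
  have "ennreal l * emeasure M D = (\<integral>\<^sup>+\<omega>. ennreal l * indicator D \<omega> \<partial>M)"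
    by (simp add: nn_integral_cmult_indicator)
  also have "\<dots> \<le> (\<integral>\<^sup>+\<omega>. ennreal (\<Prod>i<Suc K. W i \<omega>) * indicator D \<omega> \<partial>M)"
    by (intro nn_integral_mono)
      (auto simp: D_def V_def partial_prod_exceeds_Suc indicator_def intro!: ennreal_leI)
  finally have stopped_D: "ennreal l * emeasure M D
      \<le> (\<integral>\<^sup>+\<omega>. ennreal (\<Prod>i<Suc K. W i \<omega>) * indicator D \<omega> \<partial>M)" .
  have "ennreal l * emeasure M (partial_prod_exceeds M W l (Suc K))
      = ennreal l * emeasure M V + ennreal l * emeasure M D"
    using VD plus_emeasure[of V M D] by (simp add: distrib_left[symmetric])
  also have "\<dots> \<le> (\<integral>\<^sup>+\<omega>. ennreal (\<Prod>i<Suc K. W i \<omega>) * indicator V \<omega>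
        + ennreal (\<Prod>i<Suc K. W i \<omega>) * indicator D \<omega> \<partial>M)"
    using stopped_V stopped_D by (simp add: nn_integral_add add_mono)
  also have "\<dots> = (\<integral>\<^sup>+\<omega>. ennreal (\<Prod>i<Suc K. W i \<omega>)
        * indicator (partial_prod_exceeds M W l (Suc K)) \<omega> \<partial>M)"
    using VD by (intro nn_integral_cong) (auto simp: indicator_def)
  finally show ?case .
qed

lemma (in prob_space) ville_inequality_discrete:
  assumes ind: "indep_vars (\<lambda>_. borel) W {..<K}"
    and nn: "\<And>i \<omega>. 0 \<le> W i \<omega>"
    and mean: "\<And>i. i < K \<Longrightarrow> (\<integral>\<^sup>+\<omega>. ennreal (W i \<omega>) \<partial>M) = 1"
    and rv[measurable]: "\<And>i. W i \<in> borel_measurable M"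
    and l: "0 < l"
  shows "emeasure M (partial_prod_exceeds M W l K) \<le> ennreal (1 / l)"
proof -
  have "ennreal l * emeasure M (partial_prod_exceeds M W l K)
     \<le> (\<integral>\<^sup>+\<omega>. ennreal (\<Prod>i<K. W i \<omega>) * indicator (partial_prod_exceeds M W l K) \<omega> \<partial>M)"
    by (rule ville_inequality_discrete_strong[OF ind nn mean rv])
  also have "\<dots> \<le> (\<integral>\<^sup>+\<omega>. (\<Prod>i\<in>{..<K}. ennreal (W i \<omega>)) \<partial>M)"
    using nn by (intro nn_integral_mono) (auto simp: indicator_def prod_ennreal)
  also have "\<dots> = (\<Prod>i\<in>{..<K}. \<integral>\<^sup>+\<omega>. ennreal (W i \<omega>) \<partial>M)"
    by (rule indep_vars_nn_integral) (auto intro!: indep_vars_compose2[OF ind])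
  also have "\<dots> = 1" using mean by simp
  finally have "ennreal l * emeasure M (partial_prod_exceeds M W l K) \<le> 1" .
  then have "ennreal (1 / l) * (ennreal l * emeasure M (partial_prod_exceeds M W l K)) \<le> ennreal (1 / l)"
    using mult_left_mono[of _ 1 "ennreal (1 / l)"] by simp
  then show ?thesis
    using l by (simp add: mult.assoc[symmetric] ennreal_mult[symmetric])
qed

section \<open>Maximal inequality for the exponential martingale of Brownian motion\<close>

lemma (in prob_space) normal_mgf:
  assumes D: "distributed M lborel D (\<lambda>y. ennreal (normal_density 0 s y))" and s: "0 < s"
  shows "(\<integral>\<^sup>+\<omega>. ennreal (exp (g * D \<omega> - g\<^sup>2 * s\<^sup>2 / 2)) \<partial>M) = 1"
proof -
  have "(\<integral>\<^sup>+\<omega>. ennreal (exp (g * D \<omega> - g\<^sup>2 * s\<^sup>2 / 2)) \<partial>M)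
      = (\<integral>\<^sup>+y. ennreal (normal_density 0 s y) * ennreal (exp (g * y - g\<^sup>2 * s\<^sup>2 / 2)) \<partial>lborel)"
    by (rule distributed_nn_integral[OF D, symmetric]) simp
  also have "\<dots> = (\<integral>\<^sup>+y. ennreal (normal_density (g * s\<^sup>2) s y) \<partial>lborel)"
  proof (intro nn_integral_cong)
    fix y :: real
    have "- (y - 0)\<^sup>2 / (2 * s\<^sup>2) + (g * y - g\<^sup>2 * s\<^sup>2 / 2) = - (y - g * s\<^sup>2)\<^sup>2 / (2 * s\<^sup>2)"
      using s by (simp add: field_simps power2_eq_square)
    then have "normal_density 0 s y * exp (g * y - g\<^sup>2 * s\<^sup>2 / 2) = normal_density (g * s\<^sup>2) s y"
      unfolding normal_density_def by (simp add: exp_add[symmetric])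
    then show "ennreal (normal_density 0 s y) * ennreal (exp (g * y - g\<^sup>2 * s\<^sup>2 / 2))
        = ennreal (normal_density (g * s\<^sup>2) s y)"
      by (simp add: ennreal_mult'[symmetric] normal_density_nonneg)
  qed
  also have "\<dots> = ennreal (\<integral>y. normal_density (g * s\<^sup>2) s y \<partial>lborel)"
    using s by (intro nn_integral_eq_integral) (auto simp: normal_density_nonneg)
  also have "\<dots> = 1" using s by simp
  finally show ?thesis .
qed

lemma dyadic_floor_tendsto: "(\<lambda>n. real_of_int \<lfloor>t * 2^n\<rfloor> / 2^n) \<longlonglongrightarrow> t"
proof (rule tendsto_sandwich[OF _ _ _ tendsto_const])
  show "(\<lambda>n. t - (1/2::real)^n) \<longlonglongrightarrow> t"
    using tendsto_diff[OF tendsto_const LIMSEQ_power_zero[of "1/2::real"]] by simp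
  have "t - (1/2)^n \<le> real_of_int \<lfloor>t * 2^n\<rfloor> / 2^n" for n :: nat
  proof -
    have "(t * 2^n - 1) / 2^n \<le> real_of_int \<lfloor>t * 2^n\<rfloor> / 2^n"
      by (intro divide_right_mono) (linarith, simp)
    then show ?thesis by (simp add: diff_divide_distrib power_one_over)
  qed
  then show "\<forall>\<^sub>F n in sequentially. t - (1/2)^n \<le> real_of_int \<lfloor>t * 2^n\<rfloor> / 2^n"
    by simp
  have "real_of_int \<lfloor>t * 2^n\<rfloor> / 2^n \<le> t" for n :: nat
    by (simp add: divide_le_eq)
  then show "\<forall>\<^sub>F n in sequentially. real_of_int \<lfloor>t * 2^n\<rfloor> / 2^n \<le> t"
    by simp
qed

locale std_brownian_motion = prob_space M for M :: "'a measure" +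
  fixes B :: "real \<Rightarrow> 'a \<Rightarrow> real"
  assumes BM: "std_BM M B"
begin

lemma B_measurable[measurable]: "B t \<in> borel_measurable M"
  using BM by (auto simp: std_BM_def)

lemma B_zero: "\<omega> \<in> space M \<Longrightarrow> B 0 \<omega> = 0"
  using BM by (auto simp: std_BM_def)

lemma B_continuous: "\<omega> \<in> space M \<Longrightarrow> continuous_on {0..} (\<lambda>t. B t \<omega>)"
  using BM by (auto simp: std_BM_def)

lemma grid_increments:
  assumes h: "0 < h"
  shows "indep_vars (\<lambda>_. borel) (\<lambda>i \<omega>. B (real (Suc i) * h) \<omega> - B (real i * h) \<omega>) {..<K}"
    and "\<And>i. i < K \<Longrightarrow> distributed M lborel (\<lambda>\<omega>. B (real (Suc i) * h) \<omega> - B (real i * h) \<omega>)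
                 (\<lambda>y. ennreal (normal_density 0 (sqrt h) y))"
proof -
  have "0 \<le> real 0 * h \<and> (\<forall>i<K. real i * h < real (Suc i) * h)"
    using h by auto
  note inc = BM[unfolded std_BM_def, THEN conjunct2, THEN conjunct2, rule_format,
      of "\<lambda>i. real i * h" K, OF this]
  then show "indep_vars (\<lambda>_. borel) (\<lambda>i \<omega>. B (real (Suc i) * h) \<omega> - B (real i * h) \<omega>) {..<K}"
    by blast
  have "real (Suc i) * h - real i * h = h" for i
    by (simp add: algebra_simps)
  with inc show "\<And>i. i < K \<Longrightarrow> distributed M lborel (\<lambda>\<omega>. B (real (Suc i) * h) \<omega> - B (real i * h) \<omega>)
                 (\<lambda>y. ennreal (normal_density 0 (sqrt h) y))"
    by simp
qed

definition exp_mart :: "real \<Rightarrow> real \<Rightarrow> 'a \<Rightarrow> real" where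
  "exp_mart g t \<omega> = exp (g * B t \<omega> - g\<^sup>2 * t / 2)"

lemma exp_mart_measurable[measurable]: "exp_mart g t \<in> borel_measurable M"
  unfolding exp_mart_def by measurable

lemma exp_mart_continuous: "\<omega> \<in> space M \<Longrightarrow> continuous_on {0..} (\<lambda>t. exp_mart g t \<omega>)"
  unfolding exp_mart_def using B_continuous by (intro continuous_intros) auto

text \<open>On the grid of mesh h the exponential martingale is the running product of the
  independent mean-one factors exp (g (B_(i+1)h - B_ih) - g^2 h / 2).\<close>

lemma ville_inequality_grid:
  assumes h: "0 < h" and l: "0 < l"
  shows "emeasure M {\<omega>\<in>space M. \<exists>j\<le>K. l < exp_mart g (real j * h) \<omega>} \<le> ennreal (1 / l)"
proof -
  define W where "W i \<omega> = exp (g * (B (real (Suc i) * h) \<omega> - B (real i * h) \<omega>) - g\<^sup>2 * (sqrt h)\<^sup>2 / 2)"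
    for i \<omega>
  have [measurable]: "\<And>i. W i \<in> borel_measurable M"
    unfolding W_def by measurable
  have "indep_vars (\<lambda>_. borel) W {..<K}"
    unfolding W_def by (rule indep_vars_compose2[OF grid_increments(1)[OF h]]) auto
  moreover have "(\<integral>\<^sup>+\<omega>. ennreal (W i \<omega>) \<partial>M) = 1" if "i < K" for i
    unfolding W_def using h by (intro normal_mgf[OF grid_increments(2)[OF h that]]) auto
  ultimately have bound: "emeasure M (partial_prod_exceeds M W l K) \<le> ennreal (1 / l)"
    using l by (intro ville_inequality_discrete) (auto simp: W_def)
  have prod_eq: "(\<Prod>i<j. W i \<omega>) = exp_mart g (real j * h) \<omega>" if "\<omega> \<in> space M" for j \<omega>
  proof -
    have "(\<Prod>i<j. W i \<omega>)
        = exp (\<Sum>i<j. g * (B (real (Suc i) * h) \<omega> - B (real i * h) \<omega>) - g\<^sup>2 * h / 2)"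
      unfolding W_def using h by (simp add: exp_sum)
    also have "(\<Sum>i<j. g * (B (real (Suc i) * h) \<omega> - B (real i * h) \<omega>) - g\<^sup>2 * h / 2)
        = g * (\<Sum>i<j. B (real (Suc i) * h) \<omega> - B (real i * h) \<omega>) - real j * (g\<^sup>2 * h / 2)"
      by (simp add: sum_subtractf sum_distrib_left right_diff_distrib)
    also have "(\<Sum>i<j. B (real (Suc i) * h) \<omega> - B (real i * h) \<omega>) = B (real j * h) \<omega>"
      using sum_lessThan_telescope[of "\<lambda>i. B (real i * h) \<omega>" j] B_zero[OF that] by simp
    finally show ?thesis
      unfolding exp_mart_def by (simp add: algebra_simps)
  qed
  have "{\<omega>\<in>space M. \<exists>j\<le>K. l < exp_mart g (real j * h) \<omega>} = partial_prod_exceeds M W l K"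
    using prod_eq by (auto simp: partial_prod_exceeds_def)
  with bound show ?thesis
    by simp
qed

lemma exp_mart_exceeds_eq_dyadic:
  "{\<omega>\<in>space M. \<exists>t\<ge>0. l < exp_mart g t \<omega>}
    = (\<Union>n. {\<omega>\<in>space M. \<exists>j\<le>n * 2^n. l < exp_mart g (real j / 2^n) \<omega>})"
proof (intro equalityI subsetI)
  fix \<omega> assume "\<omega> \<in> {\<omega>\<in>space M. \<exists>t\<ge>0. l < exp_mart g t \<omega>}"
  then obtain t where \<omega>: "\<omega> \<in> space M" and t: "0 \<le> t" "l < exp_mart g t \<omega>"
    by auto
  obtain d where d: "0 < d"
    and near: "\<And>s. 0 \<le> s \<Longrightarrow> dist s t < d \<Longrightarrow> dist (exp_mart g s \<omega>) (exp_mart g t \<omega>) < exp_mart g t \<omega> - l"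
    using exp_mart_continuous[OF \<omega>] t unfolding continuous_on_iff by (metis atLeast_iff diff_gt_0_iff_gt)
  obtain n0 where n0: "(1/2::real)^n0 < d"
    using real_arch_pow_inv[OF d, of "1/2"] by auto
  define n where "n = max n0 (nat \<lceil>t\<rceil>)"
  have "(1/2::real)^n \<le> (1/2)^n0"
    unfolding n_def by (intro power_decreasing) auto
  with n0 have mesh: "1 / 2^n < d"
    by (simp add: power_one_over)
  define j where "j = nat \<lfloor>t * 2^n\<rfloor>"
  have j: "real j \<le> t * 2^n" "t * 2^n < real j + 1"
    unfolding j_def using t by (simp_all add: of_nat_nat)
  have "t \<le> real n"
    unfolding n_def by linarith
  then have "real j \<le> real n * 2^n"
    using j(1) by (meson order.trans mult_right_mono zero_le_power zero_le_numeral)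
  then have jn: "j \<le> n * 2^n"
    by (metis of_nat_le_iff of_nat_mult of_nat_numeral of_nat_power)
  have "dist (real j / 2^n) t < d"
    using j mesh by (simp add: dist_real_def field_simps)
  then have "l < exp_mart g (real j / 2^n) \<omega>"
    using near[of "real j / 2^n"] by (simp add: dist_real_def abs_less_iff)
  then show "\<omega> \<in> (\<Union>n. {\<omega>\<in>space M. \<exists>j\<le>n * 2^n. l < exp_mart g (real j / 2^n) \<omega>})"
    using \<omega> jn by blast
next
  fix \<omega> assume "\<omega> \<in> (\<Union>n. {\<omega>\<in>space M. \<exists>j\<le>n * 2^n. l < exp_mart g (real j / 2^n) \<omega>})"
  then obtain n j where "\<omega> \<in> space M" "l < exp_mart g (real j / 2^n) \<omega>"
    by auto
  moreover have "0 \<le> real j / 2^n"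
    by simp
  ultimately show "\<omega> \<in> {\<omega>\<in>space M. \<exists>t\<ge>0. l < exp_mart g t \<omega>}"
    by blast
qed

lemma ville_inequality:
  assumes l: "0 < l"
  shows "{\<omega>\<in>space M. \<exists>t\<ge>0. l < exp_mart g t \<omega>} \<in> sets M"
    and "emeasure M {\<omega>\<in>space M. \<exists>t\<ge>0. l < exp_mart g t \<omega>} \<le> ennreal (1 / l)"
proof -
  define A where "A n = {\<omega>\<in>space M. \<exists>j\<le>n * 2^n. l < exp_mart g (real j / 2^n) \<omega>}" for n :: nat
  have A_sets: "A n \<in> sets M" for n
  proof -
    have "A n = (\<Union>j\<in>{..n * 2^n}. {\<omega>\<in>space M. l < exp_mart g (real j / 2^n) \<omega>})"
      by (auto simp: A_def)
    also have "\<dots> \<in> sets M"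
      by (intro sets.finite_UN) auto
    finally show ?thesis .
  qed
  have "incseq A"
  proof (rule incseq_SucI, rule subsetI)
    fix n \<omega> assume "\<omega> \<in> A n"
    then obtain j where "\<omega> \<in> space M" "j \<le> n * 2^n" "l < exp_mart g (real j / 2^n) \<omega>"
      by (auto simp: A_def)
    moreover have "real (2 * j) / 2^Suc n = real j / 2^n"
      by simp
    ultimately show "\<omega> \<in> A (Suc n)"
      unfolding A_def by (intro CollectI conjI exI[of _ "2 * j"]) auto
  qed
  have eq: "{\<omega>\<in>space M. \<exists>t\<ge>0. l < exp_mart g t \<omega>} = (\<Union>n. A n)"
    unfolding A_def by (rule exp_mart_exceeds_eq_dyadic)
  show "{\<omega>\<in>space M. \<exists>t\<ge>0. l < exp_mart g t \<omega>} \<in> sets M"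
    unfolding eq using A_sets by auto
  have "emeasure M (\<Union>n. A n) = (SUP n. emeasure M (A n))"
    using A_sets \<open>incseq A\<close> by (intro SUP_emeasure_incseq[symmetric]) auto
  also have "\<dots> \<le> ennreal (1 / l)"
  proof (rule SUP_least)
    fix n
    have "A n = {\<omega>\<in>space M. \<exists>j\<le>n * 2^n. l < exp_mart g (real j * (1 / 2^n)) \<omega>}"
      by (simp add: A_def)
    then show "emeasure M (A n) \<le> ennreal (1 / l)"
      using ville_inequality_grid[OF _ l, of "1 / 2^n"] by simp
  qed
  finally show "emeasure M {\<omega>\<in>space M. \<exists>t\<ge>0. l < exp_mart g t \<omega>} \<le> ennreal (1 / l)"
    unfolding eq .
qed

text \<open>Raising to the power p turns exp (sg B_t - p sg^2 t / 2) into the exponential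
  martingale with parameter p sg.\<close>

lemma sup_exp_BM_tail:
  assumes sg: "0 < sg" and p: "1 < p" and c: "0 < c"
  shows "{\<omega>\<in>space M. \<exists>t\<ge>0. c < exp (sg * B t \<omega> - p * sg\<^sup>2 / 2 * t)} \<in> sets M"
    and "emeasure M {\<omega>\<in>space M. \<exists>t\<ge>0. c < exp (sg * B t \<omega> - p * sg\<^sup>2 / 2 * t)} \<le> ennreal (1 / c powr p)"
proof -
  have "c < exp a \<longleftrightarrow> c powr p < exp (p * a)" for a
  proof -
    have "c < exp a \<longleftrightarrow> ln c < a"
      using c by (metis exp_less_cancel_iff exp_ln)
    also have "\<dots> \<longleftrightarrow> p * ln c < p * a"
      using p by simp
    also have "\<dots> \<longleftrightarrow> c powr p < exp (p * a)"
      using c by (simp add: powr_def)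
    finally show ?thesis .
  qed
  moreover have "p * (sg * B t \<omega> - p * sg\<^sup>2 / 2 * t) = (p * sg) * B t \<omega> - (p * sg)\<^sup>2 * t / 2" for t \<omega>
    by (simp add: algebra_simps power2_eq_square)
  ultimately have eq: "{\<omega>\<in>space M. \<exists>t\<ge>0. c < exp (sg * B t \<omega> - p * sg\<^sup>2 / 2 * t)}
      = {\<omega>\<in>space M. \<exists>t\<ge>0. c powr p < exp_mart (p * sg) t \<omega>}"
    unfolding exp_mart_def by simp
  have "0 < c powr p" using c by simp
  then show "{\<omega>\<in>space M. \<exists>t\<ge>0. c < exp (sg * B t \<omega> - p * sg\<^sup>2 / 2 * t)} \<in> sets M"
    and "emeasure M {\<omega>\<in>space M. \<exists>t\<ge>0. c < exp (sg * B t \<omega> - p * sg\<^sup>2 / 2 * t)} \<le> ennreal (1 / c powr p)"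
    unfolding eq by (rule ville_inequality(1), rule ville_inequality(2))
qed

definition tail_event :: "real \<Rightarrow> real \<Rightarrow> nat \<Rightarrow> 'a set" where
  "tail_event sg p k = {\<omega>\<in>space M. \<exists>t\<ge>0. 2^k < exp (sg * B t \<omega> - p * sg\<^sup>2 / 2 * t)}"

text \<open>A majorant of sup_t exp (sg B_t - p sg^2 t / 2) whose measurability and integrability
  follow directly from the tail bound.\<close>

definition sup_envelope :: "real \<Rightarrow> real \<Rightarrow> 'a \<Rightarrow> ennreal" where
  "sup_envelope sg p \<omega> = 1 + (\<Sum>k. ennreal (2^(k+1)) * indicator (tail_event sg p k) \<omega>)"

lemma tail_event_sets:
  assumes "0 < sg" "1 < p"
  shows "tail_event sg p k \<in> sets M"
  unfolding tail_event_def using assms by (intro sup_exp_BM_tail(1)) auto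

lemma sup_envelope_measurable:
  assumes "0 < sg" "1 < p"
  shows "sup_envelope sg p \<in> borel_measurable M"
  using tail_event_sets[OF assms] unfolding sup_envelope_def by measurable

lemma emeasure_tail_event_weighted:
  assumes sg: "0 < sg" and p: "1 < p"
  shows "ennreal (2^(k+1)) * emeasure M (tail_event sg p k) \<le> ennreal (2 * (2 powr (1 - p))^k)"
proof -
  have "emeasure M (tail_event sg p k) \<le> ennreal (1 / (2^k) powr p)"
    unfolding tail_event_def by (rule sup_exp_BM_tail(2)[OF sg p]) simp
  then have "ennreal (2^(k+1)) * emeasure M (tail_event sg p k)
      \<le> ennreal (2^(k+1)) * ennreal (1 / (2^k) powr p)"
    by (rule mult_left_mono) simp
  also have "\<dots> = ennreal (2 * (2 powr (1 - p))^k)"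
  proof -
    have "((2::real)^k) powr p = (2 powr real k) powr p"
      by (simp add: powr_realpow)
    also have "\<dots> = (2 powr p) powr real k"
      by (simp add: powr_powr mult.commute)
    also have "\<dots> = (2 powr p)^k"
      by (simp add: powr_realpow)
    finally have "(2::real)^(k+1) * (1 / (2^k) powr p) = 2 * (2 / 2 powr p)^k"
      by (simp add: power_divide)
    also have "2 / 2 powr p = 2 powr (1 - p)"
      by (simp add: powr_diff)
    finally show ?thesis
      by (simp add: ennreal_mult[symmetric])
  qed
  finally show ?thesis .
qed

lemma nn_integral_sup_envelope_finite:
  assumes sg: "0 < sg" and p: "1 < p"
  shows "(\<integral>\<^sup>+\<omega>. sup_envelope sg p \<omega> \<partial>M) < \<infinity>"
proof -
  have "(2::real) powr (1 - p) < 2 powr 0"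
    using p by (intro powr_less_mono) auto
  then have r: "0 < 2 powr (1 - p)" "2 powr (1 - p) < 1"
    by auto
  have [measurable]: "tail_event sg p k \<in> sets M" for k
    by (rule tail_event_sets[OF sg p])
  have "(\<integral>\<^sup>+\<omega>. sup_envelope sg p \<omega> \<partial>M) = 1 + (\<Sum>k. ennreal (2^(k+1)) * emeasure M (tail_event sg p k))"
    unfolding sup_envelope_def
    by (simp add: nn_integral_add nn_integral_suminf nn_integral_cmult_indicator emeasure_space_1)
  also have "\<dots> \<le> 1 + (\<Sum>k. ennreal (2 * (2 powr (1 - p))^k))"
    using emeasure_tail_event_weighted[OF sg p] by (intro add_left_mono suminf_le) auto
  also have "\<dots> = 1 + ennreal (\<Sum>k. 2 * (2 powr (1 - p))^k)"
    using r by (subst suminf_ennreal2) (auto intro!: summable_mult summable_geometric)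
  also have "\<dots> < \<infinity>"
    by simp
  finally show ?thesis .
qed

lemma exp_BM_le_sup_envelope:
  assumes \<omega>: "\<omega> \<in> space M" and t: "0 \<le> t"
  shows "ennreal (exp (sg * B t \<omega> - p * sg\<^sup>2 / 2 * t)) \<le> sup_envelope sg p \<omega>"
proof -
  define v where "v = exp (sg * B t \<omega> - p * sg\<^sup>2 / 2 * t)"
  have v: "0 < v"
    by (simp add: v_def)
  show ?thesis
  proof (cases "v \<le> 1")
    case True
    then show ?thesis
      unfolding v_def[symmetric] sup_envelope_def by (metis ennreal_1 ennreal_leI add_increasing2 zero_le)
  next
    case False
    define k where "k = nat (\<lceil>log 2 v\<rceil> - 1)"
    have "0 < log 2 v"
      using False v by simp
    then have k: "real k = real_of_int \<lceil>log 2 v\<rceil> - 1"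
      unfolding k_def by (simp add: of_nat_nat)
    have "(2::real)^k = 2 powr real k"
      by (simp add: powr_realpow)
    also have "\<dots> < 2 powr (log 2 v)"
      using k by (intro powr_less_mono) linarith+
    also have "\<dots> = v"
      using v by simp
    finally have "\<omega> \<in> tail_event sg p k"
      unfolding tail_event_def v_def using \<omega> t by blast
    moreover have "v \<le> 2^(k+1)"
    proof -
      have "v = 2 powr (log 2 v)"
        using v by simp
      also have "\<dots> \<le> 2 powr (real k + 1)"
        using k by (intro powr_mono) linarith+
      finally show ?thesis
        by (simp add: powr_add powr_realpow)
    qed
    ultimately have "ennreal v \<le> ennreal (2^(k+1)) * indicator (tail_event sg p k) \<omega>"
      by (simp add: ennreal_leI)
    also have "\<dots> \<le> (\<Sum>k. ennreal (2^(k+1)) * indicator (tail_event sg p k) \<omega>)"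
      using sum_le_suminf[OF summableI, of "{k}"] by simp
    also have "\<dots> \<le> sup_envelope sg p \<omega>"
      unfolding sup_envelope_def by simp
    finally show ?thesis
      unfolding v_def .
  qed
qed

text \<open>The rate gap c - r is split evenly: half of it is kept as the decay rate eps, the other
  half pays for the exponent p > 1 needed in Ville's inequality.\<close>

lemma discounted_GBM_envelope:
  fixes sg r c :: real
  assumes sg: "0 < sg" and rc: "r < c"
  obtains S :: "'a \<Rightarrow> real" and \<epsilon> :: real where "integrable M S" "\<And>\<omega>. 0 \<le> S \<omega>" "0 < \<epsilon>"
    "AE \<omega> in M. \<forall>t\<ge>0. exp (- c * t) * exp ((r - sg\<^sup>2 / 2) * t + sg * B t \<omega>) \<le> exp (- \<epsilon> * t) * S \<omega>"
proof
  define p where "p = 1 + (c - r) / sg\<^sup>2"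
  have p: "1 < p"
    using sg rc by (simp add: p_def)
  note [measurable] = sup_envelope_measurable[OF sg p]
  show "integrable M (\<lambda>\<omega>. enn2real (sup_envelope sg p \<omega>))"
  proof (rule integrableI_bounded)
    have "(\<integral>\<^sup>+\<omega>. ennreal (norm (enn2real (sup_envelope sg p \<omega>))) \<partial>M) \<le> (\<integral>\<^sup>+\<omega>. sup_envelope sg p \<omega> \<partial>M)"
      by (intro nn_integral_mono) (simp add: ennreal_enn2real_if)
    then show "(\<integral>\<^sup>+\<omega>. ennreal (norm (enn2real (sup_envelope sg p \<omega>))) \<partial>M) < \<infinity>"
      using nn_integral_sup_envelope_finite[OF sg p] by (rule le_less_trans)
  qed measurable
  show "0 \<le> enn2real (sup_envelope sg p \<omega>)" for \<omega>
    by simp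
  show "0 < (c - r) / 2"
    using rc by simp
  have "AE \<omega> in M. sup_envelope sg p \<omega> \<noteq> \<infinity>"
    using nn_integral_sup_envelope_finite[OF sg p] by (intro nn_integral_PInf_AE) auto
  then show "AE \<omega> in M. \<forall>t\<ge>0. exp (- c * t) * exp ((r - sg\<^sup>2 / 2) * t + sg * B t \<omega>)
      \<le> exp (- ((c - r) / 2) * t) * enn2real (sup_envelope sg p \<omega>)"
  proof (rule AE_mp, intro AE_I2 impI allI)
    fix \<omega> and t :: real
    assume \<omega>: "\<omega> \<in> space M" and fin: "sup_envelope sg p \<omega> \<noteq> \<infinity>" and t: "0 \<le> t"
    have "exp (- c * t) * exp ((r - sg\<^sup>2 / 2) * t + sg * B t \<omega>)
        = exp (- ((c - r) / 2) * t) * exp (sg * B t \<omega> - p * sg\<^sup>2 / 2 * t)"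
      using sg by (simp add: p_def field_simps flip: exp_add)
    also have "\<dots> \<le> exp (- ((c - r) / 2) * t) * enn2real (sup_envelope sg p \<omega>)"
    proof (intro mult_left_mono)
      show "exp (sg * B t \<omega> - p * sg\<^sup>2 / 2 * t) \<le> enn2real (sup_envelope sg p \<omega>)"
        using enn2real_mono[OF exp_BM_le_sup_envelope[OF \<omega> t, of sg p]] fin by (simp add: less_top)
    qed simp
    finally show "exp (- c * t) * exp ((r - sg\<^sup>2 / 2) * t + sg * B t \<omega>)
        \<le> exp (- ((c - r) / 2) * t) * enn2real (sup_envelope sg p \<omega>)" .
  qed
qed

lemma B_measurable_joint: "(\<lambda>x. B (max 0 (snd x)) (fst x)) \<in> borel_measurable (M \<Otimes>\<^sub>M lborel)"
proof (rule borel_measurable_LIMSEQ_real)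
  fix n :: nat
  have floor_meas: "(\<lambda>x. \<lfloor>snd x * (2::real)^n\<rfloor>) \<in> measurable (M \<Otimes>\<^sub>M lborel) (count_space UNIV)"
  proof (rule measurable_count_space_eq_countable[THEN iffD2], simp, intro conjI ballI, simp)
    fix i :: int
    have "(\<lambda>x. \<lfloor>snd x * (2::real)^n\<rfloor>) -` {i} \<inter> space (M \<Otimes>\<^sub>M lborel)
        = {x \<in> space (M \<Otimes>\<^sub>M lborel). of_int i \<le> snd x * (2::real)^n \<and> snd x * 2^n < of_int i + 1}"
      by (auto simp: floor_eq_iff)
    also have "\<dots> \<in> sets (M \<Otimes>\<^sub>M lborel)"
      by measurable
    finally show "(\<lambda>x. \<lfloor>snd x * (2::real)^n\<rfloor>) -` {i} \<inter> space (M \<Otimes>\<^sub>M lborel) \<in> sets (M \<Otimes>\<^sub>M lborel)" .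
  qed
  have "(\<lambda>x. B (max 0 (real_of_int i / 2^n)) (fst x)) \<in> borel_measurable (M \<Otimes>\<^sub>M lborel)" for i :: int
    by measurable
  from measurable_compose_countable[OF this floor_meas]
  show "(\<lambda>x. B (max 0 (real_of_int \<lfloor>snd x * (2::real)^n\<rfloor> / 2^n)) (fst x)) \<in> borel_measurable (M \<Otimes>\<^sub>M lborel)" .
next
  fix x :: "'a \<times> real" assume "x \<in> space (M \<Otimes>\<^sub>M lborel)"
  then have "continuous_on {0..} (\<lambda>t. B t (fst x))"
    by (intro B_continuous) (auto simp: space_pair_measure)
  moreover have "(\<lambda>n. max 0 (real_of_int \<lfloor>snd x * 2^n\<rfloor> / 2^n)) \<longlonglongrightarrow> max 0 (snd x)"
    by (intro tendsto_max tendsto_const dyadic_floor_tendsto)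
  ultimately show "(\<lambda>n. B (max 0 (real_of_int \<lfloor>snd x * 2^n\<rfloor> / 2^n)) (fst x)) \<longlonglongrightarrow> B (max 0 (snd x)) (fst x)"
    by (rule continuous_on_tendsto_compose) auto
qed

end

section \<open>The mortality process\<close>

lemma mark_measurable:
  assumes G: "\<And>k. (\<lambda>(m, u). G k m u) \<in> borel_measurable (borel \<Otimes>\<^sub>M borel)"
    and V: "\<And>i. i < j \<Longrightarrow> (\<lambda>x. V i (W x)) \<in> borel_measurable Nm"
    and m: "m \<in> borel_measurable Nm"
  shows "(\<lambda>x. mark G V k (m x) j (W x)) \<in> borel_measurable Nm"
  using V
proof (induction j)
  case (Suc j)
  have "(\<lambda>x. (mark G V k (m x) j (W x), V j (W x))) \<in> measurable Nm (borel \<Otimes>\<^sub>M borel)"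
    using Suc by (intro measurable_Pair) auto
  from measurable_compose[OF this G[of "k + j"]] show ?case
    by simp
qed (simp add: m)

lemma mark_restrict:
  assumes "j' \<le> j"
  shows "mark G U k m j' \<omega> = mark G (\<lambda>i v. v i) k m j' (restrict (\<lambda>i. U i \<omega>) {..<j})"
  using assms by (induction j') auto

lemma (in prob_space) indep_var_null_section:
  assumes ind: "indep_var N1 X N2 Y"
    and X[measurable]: "X \<in> measurable M N1" and Y[measurable]: "Y \<in> measurable M N2"
    and S[measurable]: "S \<in> sets (N1 \<Otimes>\<^sub>M N2)" and A[measurable]: "A \<in> sets N1"
    and AE_A: "AE \<omega> in M. X \<omega> \<in> A"
    and null: "\<And>v. v \<in> A \<Longrightarrow> emeasure M {\<omega>\<in>space M. (v, Y \<omega>) \<in> S} = 0"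
  shows "emeasure M {\<omega>\<in>space M. (X \<omega>, Y \<omega>) \<in> S} = 0"
proof -
  interpret Y: prob_space "distr M N2 Y"
    by (intro prob_space_distr) simp
  have "emeasure M {\<omega>\<in>space M. (X \<omega>, Y \<omega>) \<in> S} = emeasure (distr M (N1 \<Otimes>\<^sub>M N2) (\<lambda>\<omega>. (X \<omega>, Y \<omega>))) S"
    by (subst emeasure_distr) (auto intro!: arg_cong[where f="emeasure M"])
  also have "\<dots> = emeasure (distr M N1 X \<Otimes>\<^sub>M distr M N2 Y) S"
    using ind by (simp add: indep_var_distribution_eq)
  also have "\<dots> = (\<integral>\<^sup>+v. emeasure (distr M N2 Y) (Pair v -` S) \<partial>distr M N1 X)"
    by (intro Y.emeasure_pair_measure_alt) simp
  also have "\<dots> = (\<integral>\<^sup>+v. 0 \<partial>distr M N1 X)"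
  proof (rule nn_integral_cong_AE)
    have "AE v in distr M N1 X. v \<in> A"
      using AE_A by (subst AE_distr_iff) auto
    then show "AE v in distr M N1 X. emeasure (distr M N2 Y) (Pair v -` S) = 0"
    proof (rule AE_mp, intro AE_I2 impI)
      fix v assume "v \<in> A"
      have "emeasure (distr M N2 Y) (Pair v -` S) = emeasure M (Y -` (Pair v -` S) \<inter> space M)"
        by (intro emeasure_distr) (auto intro: sets_Pair1)
      also have "Y -` (Pair v -` S) \<inter> space M = {\<omega>\<in>space M. (v, Y \<omega>) \<in> S}"
        by auto
      finally show "emeasure (distr M N2 Y) (Pair v -` S) = 0"
        using null[OF \<open>v \<in> A\<close>] by simp
    qed
  qed
  finally show ?thesis
    by simp
qed

locale mortality_process = prob_space M for M :: "'a measure" +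
  fixes lam :: "nat \<Rightarrow> real" and E U :: "nat \<Rightarrow> 'a \<Rightarrow> real"
    and G :: "nat \<Rightarrow> real \<Rightarrow> real \<Rightarrow> real" and N :: nat and mum muM :: real
    and q :: "nat \<Rightarrow> real \<Rightarrow> real measure"
  assumes E_exp: "\<And>j. distributed M lborel (E j) (\<lambda>y. ennreal (exponential_density 1 y))"
    and U_unif: "\<And>j. distributed M lborel (U j) (indicator {0..1})"
    and U_indep: "indep_vars (\<lambda>_. borel) U UNIV"
    and lam_zero: "\<And>k. k \<ge> N + 1 \<Longrightarrow> lam k = 0"
    and q_prob: "\<And>k m. k < N \<Longrightarrow> m \<in> {mum..muM} \<Longrightarrow>
          prob_space (q k m) \<and> sets (q k m) = sets borel \<and> measure (q k m) {mum..muM} = 1"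
    and G_meas: "\<And>k. (\<lambda>(m, u). G k m u) \<in> borel_measurable (borel \<Otimes>\<^sub>M borel)"
    and G_law: "\<And>k m. k < N \<Longrightarrow> m \<in> {mum..muM} \<Longrightarrow>
          distr (uniform_measure lborel {0..1}) borel (G k m) = q k m"
begin

lemma E_measurable[measurable]: "E j \<in> borel_measurable M"
  using E_exp[of j] by (auto dest: distributed_measurable)

lemma U_measurable[measurable]: "U j \<in> borel_measurable M"
  using U_unif[of j] by (auto dest: distributed_measurable)

lemma G_measurable[measurable]: "G k m \<in> borel_measurable borel"
proof -
  have "(\<lambda>u. (m, u)) \<in> measurable borel (borel \<Otimes>\<^sub>M borel)"
    by measurable
  from measurable_compose[OF this G_meas[of k]] show ?thesis
    by simp
qed

lemma jump_time_measurable[measurable]: "jump_time lam E n0 j \<in> borel_measurable M"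
  unfolding jump_time_def hold_time_def by measurable

text \<open>The clock of stage N - n0 has rate lam (N + 1) = 0, so at most N - n0 jumps ever occur.\<close>

lemma jump_time_eq_top:
  assumes "N - n0 < j"
  shows "jump_time lam E n0 j \<omega> = \<infinity>"
proof -
  have "hold_time lam E n0 (N - n0) \<omega> = \<infinity>"
    unfolding hold_time_def using lam_zero[of "n0 + (N - n0) + 1"] by simp
  moreover have "jump_time lam E n0 j \<omega>
      = hold_time lam E n0 (N - n0) \<omega> + (\<Sum>i\<in>{..<j} - {N - n0}. hold_time lam E n0 i \<omega>)"
    unfolding jump_time_def using assms by (subst sum.remove[of _ "N - n0"]) auto
  ultimately show ?thesis
    by simp
qed

lemma njumps_eq:
  "njumps lam E n0 t \<omega> = card {j\<in>{1..N - n0}. jump_time lam E n0 j \<omega> \<le> ennreal t}"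
proof -
  have "jump_time lam E n0 j \<omega> \<le> ennreal t \<Longrightarrow> j \<le> N - n0" for j
    using jump_time_eq_top[of n0 j \<omega>] by (cases "j \<le> N - n0") (auto simp: top_unique)
  then have "{j. 0 < j \<and> jump_time lam E n0 j \<omega> \<le> ennreal t}
      = {j\<in>{1..N - n0}. jump_time lam E n0 j \<omega> \<le> ennreal t}"
    by auto
  then show ?thesis
    unfolding njumps_def by simp
qed

lemma njumps_le: "njumps lam E n0 t \<omega> \<le> N - n0"
proof -
  have "card {j\<in>{1..N - n0}. jump_time lam E n0 j \<omega> \<le> ennreal t} \<le> card {1..N - n0}"
    by (intro card_mono) auto
  then show ?thesis
    unfolding njumps_eq by simp
qed

lemma mort_n_le: "n0 \<le> N \<Longrightarrow> mort_n lam E n0 s \<omega> \<le> N"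
  unfolding mort_n_def using njumps_le[of n0 s \<omega>] by simp

lemma njumps_measurable:
  assumes T[measurable]: "T \<in> borel_measurable Nm" and W[measurable]: "W \<in> measurable Nm M"
  shows "(\<lambda>x. njumps lam E n0 (T x) (W x)) \<in> measurable Nm (count_space UNIV)"
proof (rule measurable_count_space_eq_countable[THEN iffD2], simp, intro conjI ballI, simp)
  fix a :: nat
  have "real (njumps lam E n0 (T x) (W x))
      = (\<Sum>j\<in>{1..N - n0}. if jump_time lam E n0 j (W x) \<le> ennreal (T x) then 1 else 0)" for x
    unfolding njumps_eq real_of_card by (subst sum.inter_filter) auto
  then have [measurable]: "(\<lambda>x. real (njumps lam E n0 (T x) (W x))) \<in> borel_measurable Nm"
    by simp
  have "(\<lambda>x. njumps lam E n0 (T x) (W x)) -` {a} \<inter> space Nm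
      = {x\<in>space Nm. real (njumps lam E n0 (T x) (W x)) = real a}"
    by auto
  also have "\<dots> \<in> sets Nm"
    by measurable
  finally show "(\<lambda>x. njumps lam E n0 (T x) (W x)) -` {a} \<inter> space Nm \<in> sets Nm" .
qed

lemma mort_mu_measurable:
  assumes m: "m \<in> borel_measurable Nm" and T: "T \<in> borel_measurable Nm"
    and W[measurable]: "W \<in> measurable Nm M"
  shows "(\<lambda>x. mort_mu lam E U G n0 (m x) (T x) (W x)) \<in> borel_measurable Nm"
  unfolding mort_mu_def
  by (rule measurable_compose_countable[OF mark_measurable[OF G_meas _ m] njumps_measurable[OF T W]])
    measurable

lemma mort_n_measurable:
  assumes "T \<in> borel_measurable Nm" "W \<in> measurable Nm M"
  shows "(\<lambda>x. mort_n lam E n0 (T x) (W x)) \<in> measurable Nm (count_space UNIV)"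
  unfolding mort_n_def
  using measurable_compose[OF njumps_measurable[OF assms], of "\<lambda>j. n0 + j" "count_space UNIV"] by simp

lemma mort_mu_path_measurable:
  "\<omega> \<in> space M \<Longrightarrow> (\<lambda>s. mort_mu lam E U G n0 m0 s \<omega>) \<in> borel_measurable borel"
  by (rule mort_mu_measurable) auto

lemma distr_U: "distr M lborel (U j) = uniform_measure lborel {0..1}"
  using distributed_distr_eq_density[OF U_unif[of j]] by (simp add: uniform_measure_def divide_ennreal_def)

lemma G_U_notin_range_null:
  assumes k: "k < N" and m: "m \<in> {mum..muM}"
  shows "emeasure M {\<omega>\<in>space M. G k m (U j \<omega>) \<notin> {mum..muM}} = 0"
proof -
  interpret q: prob_space "q k m"
    using q_prob[OF k m] by auto
  have sets_q: "sets (q k m) = sets borel"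
    using q_prob[OF k m] by auto
  then have "space (q k m) = UNIV"
    using sets_eq_imp_space_eq[OF sets_q] by simp
  then have "measure (q k m) (- {mum..muM}) = 0"
    using q.prob_compl[of "{mum..muM}"] q_prob[OF k m] sets_q by (simp add: Compl_eq_Diff_UNIV)
  then have "emeasure (q k m) (- {mum..muM}) = 0"
    by (simp add: q.emeasure_eq_measure)
  moreover have "q k m = distr (distr M lborel (U j)) borel (G k m)"
    using G_law[OF k m] distr_U[of j] by simp
  moreover have "\<dots> = distr M borel (G k m \<circ> U j)"
    by (intro distr_distr) auto
  moreover have "emeasure (distr M borel (G k m \<circ> U j)) (- {mum..muM})
      = emeasure M {\<omega>\<in>space M. G k m (U j \<omega>) \<notin> {mum..muM}}"
    by (subst emeasure_distr) (auto intro!: arg_cong[where f="emeasure M"])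
  ultimately show ?thesis
    by simp
qed

text \<open>The next mark is a function of the current one and of U j, which is independent of
  the marks so far; and from a mark in range, G lands in range almost surely.\<close>

lemma mark_in_range_AE_Suc:
  assumes k0: "k0 + j < N"
    and IH: "AE \<omega> in M. mark G U k0 m0 j \<omega> \<in> {mum..muM}"
  shows "AE \<omega> in M. mark G U k0 m0 (Suc j) \<omega> \<in> {mum..muM}"
proof -
  define phi where "phi v = mark G (\<lambda>i v. v i) k0 m0 j v" for v :: "nat \<Rightarrow> real"
  have phi_meas: "phi \<in> borel_measurable (PiM {..<j} (\<lambda>_. borel))"
    unfolding phi_def using mark_measurable[OF G_meas, where W="\<lambda>v. v" and V="\<lambda>i v. v i"] by simp
  have mark_eq: "mark G U k0 m0 j = phi \<circ> (\<lambda>\<omega>. restrict (\<lambda>i. U i \<omega>) {..<j})"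
    unfolding phi_def comp_def by (rule ext, rule mark_restrict) simp
  have U_eq: "U j = (\<lambda>v. v j) \<circ> (\<lambda>\<omega>. restrict (\<lambda>i. U i \<omega>) {j})"
    by auto
  have ind: "indep_var borel (mark G U k0 m0 j) borel (U j)"
    unfolding mark_eq U_eq
    by (rule indep_var_compose[OF indep_var_restrict[OF U_indep] phi_meas]) auto
  have mark_meas[measurable]: "mark G U k0 m0 j \<in> borel_measurable M"
    unfolding mark_eq using phi_meas by measurable
  define S where "S = {x \<in> space (borel \<Otimes>\<^sub>M borel). (\<lambda>(m, u). G (k0 + j) m u) x \<notin> {mum..muM}}"
  have S_sets[measurable]: "S \<in> sets (borel \<Otimes>\<^sub>M borel)"
    unfolding S_def using G_meas[of "k0 + j"] by measurable
  have "{\<omega>\<in>space M. (m, U j \<omega>) \<in> S} = {\<omega>\<in>space M. G (k0 + j) m (U j \<omega>) \<notin> {mum..muM}}" for m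
    by (auto simp: S_def space_pair_measure)
  then have null: "emeasure M {\<omega>\<in>space M. (m, U j \<omega>) \<in> S} = 0" if "m \<in> {mum..muM}" for m
    using G_U_notin_range_null[OF k0 that] by simp
  have pair_null: "emeasure M {\<omega>\<in>space M. (mark G U k0 m0 j \<omega>, U j \<omega>) \<in> S} = 0"
    by (rule indep_var_null_section[OF ind mark_meas U_measurable S_sets _ IH null]) simp
  have pair_sets: "{\<omega>\<in>space M. (mark G U k0 m0 j \<omega>, U j \<omega>) \<in> S} \<in> sets M"
    by measurable
  have "{\<omega>\<in>space M. \<not> mark G U k0 m0 (Suc j) \<omega> \<in> {mum..muM}}
      = {\<omega>\<in>space M. (mark G U k0 m0 j \<omega>, U j \<omega>) \<in> S}"
    by (auto simp: S_def space_pair_measure)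
  from AE_iff_measurable[OF pair_sets this] pair_null show ?thesis
    by (rule iffD2)
qed

lemma mort_mu_in_range_AE:
  assumes n0: "n0 \<le> N" and m0: "m0 \<in> {mum..muM}"
  shows "AE \<omega> in M. \<forall>s. mort_mu lam E U G n0 m0 s \<omega> \<in> {mum..muM}"
proof -
  have "j \<le> N - n0 \<Longrightarrow> AE \<omega> in M. mark G U n0 m0 j \<omega> \<in> {mum..muM}" for j
  proof (induction j)
    case (Suc j)
    then show ?case
      using n0 by (intro mark_in_range_AE_Suc) auto
  qed (use m0 in simp)
  then have "AE \<omega> in M. \<forall>j\<le>N - n0. mark G U n0 m0 j \<omega> \<in> {mum..muM}"
    by (subst AE_all_countable) (auto simp: AE_ball_countable)
  then show ?thesis
  proof (rule AE_mp, intro AE_I2 impI allI)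
    fix \<omega> s assume "\<forall>j\<le>N - n0. mark G U n0 m0 j \<omega> \<in> {mum..muM}"
    then show "mort_mu lam E U G n0 m0 s \<omega> \<in> {mum..muM}"
      unfolding mort_mu_def using njumps_le by blast
  qed
qed

lemma fhat_measurable: "fhat M r rh muh lam E U G k \<in> borel_measurable borel"
proof -
  define mup where "mup y s = mort_mu lam E U G k (fst y) s (snd y)" for y :: "real \<times> 'a" and s
  have "(\<lambda>z. mup (fst z) (snd z)) \<in> borel_measurable ((borel \<Otimes>\<^sub>M M) \<Otimes>\<^sub>M lborel)"
    unfolding mup_def by (rule mort_mu_measurable) auto
  then have "(\<lambda>z. indicator {0..} (snd z) *\<^sub>R disc r (mup (fst z)) (snd z) :: real)
      \<in> borel_measurable ((borel \<Otimes>\<^sub>M M) \<Otimes>\<^sub>M lborel)"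
    using disc_measurable_joint by measurable
  then have "(\<lambda>y. \<integral>u. indicator {0..} u *\<^sub>R disc r (mup y) u \<partial>lborel) \<in> borel_measurable (borel \<Otimes>\<^sub>M M)"
    by (intro lborel.borel_measurable_lebesgue_integral) (simp add: case_prod_beta)
  then have "(\<lambda>m. \<integral>\<omega>. (\<integral>u. indicator {0..} u *\<^sub>R disc r (mup (m, \<omega>)) u \<partial>lborel) \<partial>M) \<in> borel_measurable borel"
    by (intro borel_measurable_lebesgue_integral) (simp add: case_prod_beta)
  then show ?thesis
    unfolding fhat_def set_lebesgue_integral_def mup_def by simp
qed

lemma disc_mort_mu_le:
  assumes "\<omega> \<in> space M" "\<forall>s. mort_mu lam E U G n0 m0 s \<omega> \<in> {mum..muM}" "0 \<le> t"
  shows "disc r (\<lambda>s. mort_mu lam E U G n0 m0 s \<omega>) t \<le> exp (- (r + mum) * t)"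
  using assms by (intro disc_le_exp[where b=muM] mort_mu_path_measurable) auto

lemma fhat_bounds:
  assumes k: "k \<le> N" and m: "m \<in> {mum..muM}" and c: "0 < r + mum" and rh: "0 \<le> rh + muh"
  shows "0 \<le> fhat M r rh muh lam E U G k m" "fhat M r rh muh lam E U G k m \<le> (rh + muh) / (r + mum)"
proof -
  define h where "h \<omega> = (LBINT u:{0..}. disc r (\<lambda>s. mort_mu lam E U G k m s \<omega>) u)" for \<omega>
  have h_nonneg: "0 \<le> h \<omega>" for \<omega>
    unfolding h_def by (intro set_integral_nonneg_real) (simp add: disc_nonneg)
  have "AE \<omega> in M. h \<omega> \<le> 1 / (r + mum)"
    using mort_mu_in_range_AE[OF k m]
  proof (rule AE_mp, intro AE_I2 impI)
    fix \<omega> assume "\<omega> \<in> space M" "\<forall>s. mort_mu lam E U G k m s \<omega> \<in> {mum..muM}"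
    then show "h \<omega> \<le> 1 / (r + mum)"
      unfolding h_def using disc_mort_mu_le c by (intro set_integral_le_exp_decay) auto
  qed
  then have "(\<integral>\<omega>. h \<omega> \<partial>M) \<le> (\<integral>\<omega>. 1 / (r + mum) \<partial>M)"
    using c by (intro integral_mono_AE') auto
  then have "(rh + muh) * (\<integral>\<omega>. h \<omega> \<partial>M) \<le> (rh + muh) * (1 / (r + mum))"
    using rh by (intro mult_left_mono) (auto simp: prob_space)
  moreover have "fhat M r rh muh lam E U G k m = (rh + muh) * (\<integral>\<omega>. h \<omega> \<partial>M)"
    unfolding fhat_def h_def ..
  moreover have "0 \<le> (\<integral>\<omega>. h \<omega> \<partial>M)"
    using h_nonneg by simp
  ultimately show "0 \<le> fhat M r rh muh lam E U G k m" "fhat M r rh muh lam E U G k m \<le> (rh + muh) / (r + mum)"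
    using rh by simp_all
qed

end

section \<open>The optimal stopping problem\<close>

locale stopping_problem = std_brownian_motion M B + mortality_process M lam E U G N mum muM q
  for M :: "'a measure" and B lam E U G N mum muM q +
  fixes th al sg rho nu K rh muh :: real
  assumes params: "th > 0" "al \<ge> 0" "sg > 0" "rho > 0" "0 \<le> nu" "nu \<le> 1" "rh > 0"
      "0 < mum" "mum \<le> muM" "mum \<le> muh" "muh \<le> muM" "th - al - rho - mum < 0"
begin

abbreviation mu :: "nat \<Rightarrow> real \<Rightarrow> real \<Rightarrow> 'a \<Rightarrow> real" where
  "mu n0 m0 s \<omega> \<equiv> mort_mu lam E U G n0 m0 s \<omega>"

definition X1 :: "real \<Rightarrow> 'a \<Rightarrow> real" where
  "X1 t \<omega> = exp ((th - al - sg\<^sup>2 / 2) * t + sg * B t \<omega>)"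

definition running_gain :: "nat \<Rightarrow> real \<Rightarrow> ('a \<Rightarrow> ennreal) \<Rightarrow> 'a \<Rightarrow> real" where
  "running_gain n0 m0 \<tau> \<omega> = (LBINT t:{t. 0 \<le> t \<and> ennreal t < \<tau> \<omega>}.
     disc rho (\<lambda>s. mu n0 m0 s \<omega>) t * (al + nu * mu n0 m0 t \<omega>) * X1 t \<omega>)"

definition stopped_weight :: "nat \<Rightarrow> real \<Rightarrow> ('a \<Rightarrow> ennreal) \<Rightarrow> 'a \<Rightarrow> real" where
  "stopped_weight n0 m0 \<tau> \<omega> = (if \<tau> \<omega> = \<infinity> then 0 else
     disc rho (\<lambda>s. mu n0 m0 s \<omega>) (enn2real (\<tau> \<omega>))
       * fhat M rho rh muh lam E U G (mort_n lam E n0 (enn2real (\<tau> \<omega>)) \<omega>) (mu n0 m0 (enn2real (\<tau> \<omega>)) \<omega>))"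

definition payoff_slope :: "nat \<Rightarrow> real \<Rightarrow> ('a \<Rightarrow> ennreal) \<Rightarrow> 'a \<Rightarrow> real" where
  "payoff_slope n0 m0 \<tau> \<omega> = running_gain n0 m0 \<tau> \<omega> + stopped_weight n0 m0 \<tau> \<omega> * X1 (enn2real (\<tau> \<omega>)) \<omega>"

lemma Xproc_eq: "Xproc th al sg B x t \<omega> = x * X1 t \<omega>"
  unfolding Xproc_def X1_def ..

lemma payoff_affine:
  "payoff M B lam E U G th al sg rho nu K rh muh x n0 m0 \<tau> \<omega>
    = payoff_slope n0 m0 \<tau> \<omega> * x - K * stopped_weight n0 m0 \<tau> \<omega>"
proof -
  have "(LBINT t:{t. 0 \<le> t \<and> ennreal t < \<tau> \<omega>}. disc rho (\<lambda>s. mu n0 m0 s \<omega>) t * (al + nu * mu n0 m0 t \<omega>) * (x * X1 t \<omega>))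
      = x * running_gain n0 m0 \<tau> \<omega>"
    unfolding running_gain_def by (subst set_integral_mult_right[symmetric]) (simp add: mult_ac)
  then have "payoff M B lam E U G th al sg rho nu K rh muh x n0 m0 \<tau> \<omega>
      = x * running_gain n0 m0 \<tau> \<omega> + stopped_weight n0 m0 \<tau> \<omega> * (x * X1 (enn2real (\<tau> \<omega>)) \<omega> - K)"
    unfolding payoff_def stopped_weight_def Let_def Xproc_eq by simp
  then show ?thesis
    unfolding payoff_slope_def by (simp add: algebra_simps)
qed

lemma X1_nonneg: "0 \<le> X1 t \<omega>"
  unfolding X1_def by simp

lemma fhat_bound_nonneg: "0 \<le> (rh + muh) / (rho + mum)"
  using params by simp

lemma stopped_weight_bounds:
  assumes n0: "n0 \<le> N" and \<omega>: "\<omega> \<in> space M" and range: "\<forall>s. mu n0 m0 s \<omega> \<in> {mum..muM}"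
  shows "0 \<le> stopped_weight n0 m0 \<tau> \<omega>" "stopped_weight n0 m0 \<tau> \<omega> \<le> (rh + muh) / (rho + mum)"
proof -
  define s where "s = enn2real (\<tau> \<omega>)"
  have "- (rho + mum) * s \<le> 0"
    using params by (intro mult_nonpos_nonneg) (auto simp: s_def)
  have "disc rho (\<lambda>s. mu n0 m0 s \<omega>) s \<le> exp (- (rho + mum) * s)"
    using disc_mort_mu_le[OF \<omega> range] by (simp add: s_def)
  also have "\<dots> \<le> 1"
    using \<open>- (rho + mum) * s \<le> 0\<close> by simp
  finally have disc: "disc rho (\<lambda>s. mu n0 m0 s \<omega>) s \<le> 1" .
  have "0 \<le> fhat M rho rh muh lam E U G (mort_n lam E n0 s \<omega>) (mu n0 m0 s \<omega>)"
    and "fhat M rho rh muh lam E U G (mort_n lam E n0 s \<omega>) (mu n0 m0 s \<omega>) \<le> (rh + muh) / (rho + mum)"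
    using fhat_bounds[OF mort_n_le[OF n0] range[rule_format]] params by auto
  with disc show "0 \<le> stopped_weight n0 m0 \<tau> \<omega>" "stopped_weight n0 m0 \<tau> \<omega> \<le> (rh + muh) / (rho + mum)"
    unfolding stopped_weight_def s_def[symmetric]
    using mult_mono[OF disc, of _ "(rh + muh) / (rho + mum)"] by (auto simp: disc_nonneg)
qed

lemma stopped_weight_abs_le_AE:
  assumes "n0 \<le> N" "m0 \<in> {mum..muM}"
  shows "AE \<omega> in M. \<bar>stopped_weight n0 m0 \<tau> \<omega>\<bar> \<le> (rh + muh) / (rho + mum)"
  using mort_mu_in_range_AE[OF assms] AE_space
  by eventually_elim (use stopped_weight_bounds[OF assms(1)] in auto)

lemma running_gain_bounds:
  assumes range: "\<forall>s. mu n0 m0 s \<omega> \<in> {mum..muM}" and \<epsilon>: "0 < \<epsilon>" and S: "0 \<le> S"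
    and decay: "\<And>t. 0 \<le> t \<Longrightarrow> disc rho (\<lambda>s. mu n0 m0 s \<omega>) t * X1 t \<omega> \<le> exp (- \<epsilon> * t) * S"
  shows "0 \<le> running_gain n0 m0 \<tau> \<omega>" "running_gain n0 m0 \<tau> \<omega> \<le> (al + muM) / \<epsilon> * S"
proof -
  have rate: "0 \<le> al + nu * mu n0 m0 t \<omega>" "al + nu * mu n0 m0 t \<omega> \<le> al + muM" for t
    using params range[rule_format, of t] mult_mono[of nu 1 "mu n0 m0 t \<omega>" muM] by auto
  show "0 \<le> running_gain n0 m0 \<tau> \<omega>"
    unfolding running_gain_def using rate
    by (intro set_integral_nonneg_real) (simp add: disc_nonneg X1_nonneg)
  have "running_gain n0 m0 \<tau> \<omega> \<le> (al + muM) * S / \<epsilon>"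
    unfolding running_gain_def
  proof (rule set_integral_le_exp_decay[OF \<epsilon>])
    show "0 \<le> (al + muM) * S"
      using params S by (intro mult_nonneg_nonneg) auto
    show "disc rho (\<lambda>s. mu n0 m0 s \<omega>) t * (al + nu * mu n0 m0 t \<omega>) * X1 t \<omega>
        \<le> (al + muM) * S * exp (- \<epsilon> * t)" if "t \<in> {t. 0 \<le> t \<and> ennreal t < \<tau> \<omega>}" for t
    proof -
      have "(disc rho (\<lambda>s. mu n0 m0 s \<omega>) t * X1 t \<omega>) * (al + nu * mu n0 m0 t \<omega>)
          \<le> (exp (- \<epsilon> * t) * S) * (al + muM)"
        by (rule mult_mono) (use decay[of t] rate[of t] S that in auto)
      then show ?thesis
        by (simp add: mult_ac)
    qed
  qed auto
  then show "running_gain n0 m0 \<tau> \<omega> \<le> (al + muM) / \<epsilon> * S"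
    by simp
qed

lemma stopped_gain_bounds:
  assumes n0: "n0 \<le> N" and \<omega>: "\<omega> \<in> space M" and range: "\<forall>s. mu n0 m0 s \<omega> \<in> {mum..muM}"
    and S: "0 \<le> S" and bound: "\<And>t. 0 \<le> t \<Longrightarrow> disc rho (\<lambda>s. mu n0 m0 s \<omega>) t * X1 t \<omega> \<le> S"
  shows "0 \<le> stopped_weight n0 m0 \<tau> \<omega> * X1 (enn2real (\<tau> \<omega>)) \<omega>"
    "stopped_weight n0 m0 \<tau> \<omega> * X1 (enn2real (\<tau> \<omega>)) \<omega> \<le> (rh + muh) / (rho + mum) * S"
proof -
  show "0 \<le> stopped_weight n0 m0 \<tau> \<omega> * X1 (enn2real (\<tau> \<omega>)) \<omega>"
    using stopped_weight_bounds[OF n0 \<omega> range] X1_nonneg by simp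
  define s where "s = enn2real (\<tau> \<omega>)"
  have "stopped_weight n0 m0 \<tau> \<omega> * X1 s \<omega>
      \<le> (disc rho (\<lambda>s. mu n0 m0 s \<omega>) s * X1 s \<omega>)
        * fhat M rho rh muh lam E U G (mort_n lam E n0 s \<omega>) (mu n0 m0 s \<omega>)"
    using fhat_bounds[OF mort_n_le[OF n0] range[rule_format], of rho rh muh s] params
    by (auto simp: stopped_weight_def s_def disc_nonneg X1_nonneg)
  also have "\<dots> \<le> S * ((rh + muh) / (rho + mum))"
    using bound[of s] S fhat_bounds[OF mort_n_le[OF n0] range[rule_format], of rho rh muh s] params
    by (intro mult_mono) (auto simp: s_def)
  finally show "stopped_weight n0 m0 \<tau> \<omega> * X1 (enn2real (\<tau> \<omega>)) \<omega> \<le> (rh + muh) / (rho + mum) * S"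
    by (simp add: s_def mult.commute)
qed

lemma X1_envelope:
  obtains S \<epsilon> where "integrable M S" "\<And>\<omega>. 0 \<le> S \<omega>" "0 < \<epsilon>"
    "AE \<omega> in M. \<forall>t\<ge>0. exp (- (rho + mum) * t) * X1 t \<omega> \<le> exp (- \<epsilon> * t) * S \<omega>"
proof -
  have "th - al < rho + mum"
    using params by linarith
  then obtain S \<epsilon> where S: "integrable M S" "\<And>\<omega>. 0 \<le> S \<omega>" and \<epsilon>: "0 < \<epsilon>"
    and env: "AE \<omega> in M. \<forall>t\<ge>0. exp (- (rho + mum) * t) * exp ((th - al - sg\<^sup>2 / 2) * t + sg * B t \<omega>)
      \<le> exp (- \<epsilon> * t) * S \<omega>"
    using discounted_GBM_envelope[OF params(3)] by blast
  show thesis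
  proof (rule that[OF S \<epsilon>])
    show "AE \<omega> in M. \<forall>t\<ge>0. exp (- (rho + mum) * t) * X1 t \<omega> \<le> exp (- \<epsilon> * t) * S \<omega>"
      unfolding X1_def by (rule env)
  qed
qed

lemma payoff_slope_dominated:
  obtains S where "integrable M S" "\<And>\<omega>. 0 \<le> S \<omega>"
    "\<And>n0 m0 \<tau>. n0 \<le> N \<Longrightarrow> m0 \<in> {mum..muM} \<Longrightarrow> AE \<omega> in M. \<bar>payoff_slope n0 m0 \<tau> \<omega>\<bar> \<le> S \<omega>"
proof -
  obtain S \<epsilon> where S: "integrable M S" "\<And>\<omega>. 0 \<le> S \<omega>" and \<epsilon>: "0 < \<epsilon>"
    and env: "AE \<omega> in M. \<forall>t\<ge>0. exp (- (rho + mum) * t) * X1 t \<omega> \<le> exp (- \<epsilon> * t) * S \<omega>"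
    using X1_envelope by blast
  define L where "L = (al + muM) / \<epsilon> + (rh + muh) / (rho + mum)"
  have "0 \<le> L"
    unfolding L_def using params \<epsilon> by (intro add_nonneg_nonneg divide_nonneg_pos) auto
  show thesis
  proof (rule that[of "\<lambda>\<omega>. L * S \<omega>"])
    show "integrable M (\<lambda>\<omega>. L * S \<omega>)" "0 \<le> L * S \<omega>" for \<omega>
      using S \<open>0 \<le> L\<close> by simp_all
    fix n0 m0 \<tau> assume n0: "n0 \<le> N" and m0: "m0 \<in> {mum..muM}"
    show "AE \<omega> in M. \<bar>payoff_slope n0 m0 \<tau> \<omega>\<bar> \<le> L * S \<omega>"
      using mort_mu_in_range_AE[OF n0 m0] env AE_space
    proof eventually_elim
      fix \<omega> assume range: "\<forall>s. mu n0 m0 s \<omega> \<in> {mum..muM}" and \<omega>: "\<omega> \<in> space M"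
        and env: "\<forall>t\<ge>0. exp (- (rho + mum) * t) * X1 t \<omega> \<le> exp (- \<epsilon> * t) * S \<omega>"
      have decay: "disc rho (\<lambda>s. mu n0 m0 s \<omega>) t * X1 t \<omega> \<le> exp (- \<epsilon> * t) * S \<omega>" if "0 \<le> t" for t
      proof -
        have "disc rho (\<lambda>s. mu n0 m0 s \<omega>) t * X1 t \<omega> \<le> exp (- (rho + mum) * t) * X1 t \<omega>"
          by (rule mult_right_mono[OF disc_mort_mu_le[OF \<omega> range that] X1_nonneg])
        also have "\<dots> \<le> exp (- \<epsilon> * t) * S \<omega>"
          using env that by blast
        finally show ?thesis .
      qed
      moreover have "exp (- \<epsilon> * t) * S \<omega> \<le> S \<omega>" if "0 \<le> t" for t
        using \<epsilon> S(2)[of \<omega>] that by (intro mult_left_le_one_le) auto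
      ultimately have "disc rho (\<lambda>s. mu n0 m0 s \<omega>) t * X1 t \<omega> \<le> S \<omega>" if "0 \<le> t" for t
        using that order.trans by blast
      then have "0 \<le> stopped_weight n0 m0 \<tau> \<omega> * X1 (enn2real (\<tau> \<omega>)) \<omega>"
        "stopped_weight n0 m0 \<tau> \<omega> * X1 (enn2real (\<tau> \<omega>)) \<omega> \<le> (rh + muh) / (rho + mum) * S \<omega>"
        using stopped_gain_bounds[OF n0 \<omega> range S(2)] by auto
      moreover have "0 \<le> running_gain n0 m0 \<tau> \<omega>" "running_gain n0 m0 \<tau> \<omega> \<le> (al + muM) / \<epsilon> * S \<omega>"
        using running_gain_bounds[OF range \<epsilon> S(2) decay] by auto
      moreover have "L * S \<omega> = (al + muM) / \<epsilon> * S \<omega> + (rh + muh) / (rho + mum) * S \<omega>"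
        unfolding L_def by (simp add: distrib_right)
      ultimately show "\<bar>payoff_slope n0 m0 \<tau> \<omega>\<bar> \<le> L * S \<omega>"
        unfolding payoff_slope_def abs_le_iff by linarith
    qed
  qed
qed

lemma X1_measurable_joint: "(\<lambda>x. X1 (max 0 (snd x)) (fst x)) \<in> borel_measurable (M \<Otimes>\<^sub>M lborel)"
  using B_measurable_joint unfolding X1_def by measurable

lemma mu_measurable_joint: "(\<lambda>x. mu n0 m0 (snd x) (fst x)) \<in> borel_measurable (M \<Otimes>\<^sub>M lborel)"
  by (rule mort_mu_measurable) auto

lemma disc_mu_measurable_joint:
  "(\<lambda>x. disc rho (\<lambda>s. mu n0 m0 s (fst x)) (snd x)) \<in> borel_measurable (M \<Otimes>\<^sub>M lborel)"
  using disc_measurable_joint[of "\<lambda>\<omega> s. mu n0 m0 s \<omega>" M rho] mu_measurable_joint by simp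

lemma running_gain_measurable:
  assumes [measurable]: "\<tau> \<in> borel_measurable M"
  shows "running_gain n0 m0 \<tau> \<in> borel_measurable M"
proof -
  note [measurable] = X1_measurable_joint mu_measurable_joint disc_mu_measurable_joint
  define H where "H x = (if 0 \<le> snd x \<and> ennreal (snd x) < \<tau> (fst x) then
      disc rho (\<lambda>s. mu n0 m0 s (fst x)) (snd x) * (al + nu * mu n0 m0 (snd x) (fst x))
        * X1 (max 0 (snd x)) (fst x) else 0)" for x
  have "H \<in> borel_measurable (M \<Otimes>\<^sub>M lborel)"
    unfolding H_def by measurable
  then have "(\<lambda>\<omega>. \<integral>t. H (\<omega>, t) \<partial>lborel) \<in> borel_measurable M"
    by (intro lborel.borel_measurable_lebesgue_integral) (simp add: case_prod_beta)
  moreover have "running_gain n0 m0 \<tau> = (\<lambda>\<omega>. \<integral>t. H (\<omega>, t) \<partial>lborel)"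
    unfolding running_gain_def set_lebesgue_integral_def H_def
    by (intro ext Bochner_Integration.integral_cong) (auto simp: indicator_def)
  ultimately show ?thesis
    by simp
qed

lemma stopped_weight_measurable:
  assumes [measurable]: "\<tau> \<in> borel_measurable M"
  shows "stopped_weight n0 m0 \<tau> \<in> borel_measurable M"
    and "(\<lambda>\<omega>. X1 (enn2real (\<tau> \<omega>)) \<omega>) \<in> borel_measurable M"
proof -
  have pair[measurable]: "(\<lambda>\<omega>. (\<omega>, enn2real (\<tau> \<omega>))) \<in> measurable M (M \<Otimes>\<^sub>M lborel)"
    by measurable
  have [measurable]: "(\<lambda>\<omega>. disc rho (\<lambda>s. mu n0 m0 s \<omega>) (enn2real (\<tau> \<omega>))) \<in> borel_measurable M"
    using measurable_compose[OF pair disc_mu_measurable_joint] by simp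
  have "(\<lambda>\<omega>. X1 (max 0 (enn2real (\<tau> \<omega>))) \<omega>) \<in> borel_measurable M"
    using measurable_compose[OF pair X1_measurable_joint] by simp
  then show "(\<lambda>\<omega>. X1 (enn2real (\<tau> \<omega>)) \<omega>) \<in> borel_measurable M"
    by simp
  have mu_stopped: "(\<lambda>\<omega>. mu n0 m0 (enn2real (\<tau> \<omega>)) \<omega>) \<in> borel_measurable M"
    by (rule mort_mu_measurable) auto
  have [measurable]: "(\<lambda>\<omega>. fhat M rho rh muh lam E U G (mort_n lam E n0 (enn2real (\<tau> \<omega>)) \<omega>)
      (mu n0 m0 (enn2real (\<tau> \<omega>)) \<omega>)) \<in> borel_measurable M"
    by (rule measurable_compose_countable[OF measurable_compose[OF mu_stopped fhat_measurable]
          mort_n_measurable]) auto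
  show "stopped_weight n0 m0 \<tau> \<in> borel_measurable M"
    unfolding stopped_weight_def by measurable
qed

lemma stopping_time_measurable:
  assumes "is_stopping_time M (filt M B lam E U G n0 m0) \<tau>"
  shows "\<tau> \<in> borel_measurable M"
proof (rule borel_measurableI_le)
  have filt_sub: "sets (filt M B lam E U G n0 m0 t) \<subseteq> sets M" for t
  proof -
    have [measurable]: "(\<lambda>\<omega>. mort_n lam E n0 s \<omega>) \<in> measurable M (count_space UNIV)" for s
      using mort_n_measurable[of "\<lambda>_. s" M "\<lambda>x. x"] by simp
    have [measurable]: "mort_mu lam E U G n0 m0 s \<in> borel_measurable M" for s
      using mort_mu_measurable[of "\<lambda>_. m0" M "\<lambda>_. s" "\<lambda>x. x"] by simp
    have gen: "gen_sets M ({B s | s. 0 \<le> s \<and> s \<le> t}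
          \<union> {(\<lambda>\<omega>. real (mort_n lam E n0 s \<omega>)) | s. 0 \<le> s \<and> s \<le> t}
          \<union> {mort_mu lam E U G n0 m0 s | s. 0 \<le> s \<and> s \<le> t}) \<union> null_sets M \<subseteq> sets M"
      unfolding gen_sets_def by (auto intro: measurable_sets)
    then have "sets (filt M B lam E U G n0 m0 t) = sigma_sets (space M) (gen_sets M ({B s | s. 0 \<le> s \<and> s \<le> t}
          \<union> {(\<lambda>\<omega>. real (mort_n lam E n0 s \<omega>)) | s. 0 \<le> s \<and> s \<le> t}
          \<union> {mort_mu lam E U G n0 m0 s | s. 0 \<le> s \<and> s \<le> t}) \<union> null_sets M)"
      unfolding filt_def using sets.sets_into_space by (intro sets_measure_of) auto
    also have "\<dots> \<subseteq> sets M"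
      using gen by (rule sets.sigma_sets_subset)
    finally show ?thesis .
  qed
  fix y :: ennreal
  show "{\<omega> \<in> space M. \<tau> \<omega> \<le> y} \<in> sets M"
  proof (cases y rule: ennreal_cases)
    case (real r)
    then show ?thesis
      using assms filt_sub unfolding is_stopping_time_def by auto
  qed simp
qed

lemma infinity_is_stopping_time: "is_stopping_time M (filt M B lam E U G n0 m0) (\<lambda>_. \<infinity>)"
  unfolding is_stopping_time_def by (simp add: top_unique)

lemma expected_payoff_affine:
  assumes n0: "n0 \<le> N" and m0: "m0 \<in> {mum..muM}" and \<tau>: "\<tau> \<in> borel_measurable M"
  shows "(\<integral>\<omega>. payoff M B lam E U G th al sg rho nu K rh muh x n0 m0 \<tau> \<omega> \<partial>M)
    = (\<integral>\<omega>. payoff_slope n0 m0 \<tau> \<omega> \<partial>M) * x + - K * (\<integral>\<omega>. stopped_weight n0 m0 \<tau> \<omega> \<partial>M)"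
proof -
  obtain S where S: "integrable M S" "\<And>\<omega>. 0 \<le> S \<omega>"
    and dom: "\<And>n0 m0 \<tau>. n0 \<le> N \<Longrightarrow> m0 \<in> {mum..muM} \<Longrightarrow> AE \<omega> in M. \<bar>payoff_slope n0 m0 \<tau> \<omega>\<bar> \<le> S \<omega>"
    using payoff_slope_dominated by blast
  have "payoff_slope n0 m0 \<tau> \<in> borel_measurable M"
    using running_gain_measurable[OF \<tau>] stopped_weight_measurable[OF \<tau>]
    unfolding payoff_slope_def by measurable
  then have "integrable M (payoff_slope n0 m0 \<tau>)"
  proof (rule Bochner_Integration.integrable_bound[OF S(1)])
    show "AE \<omega> in M. norm (payoff_slope n0 m0 \<tau> \<omega>) \<le> norm (S \<omega>)"
      using dom[OF n0 m0] by (rule AE_mp) (intro AE_I2 impI, simp add: abs_of_nonneg S(2))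
  qed
  moreover have "integrable M (stopped_weight n0 m0 \<tau>)"
  proof (rule Bochner_Integration.integrable_bound[OF integrable_const[of "(rh + muh) / (rho + mum)"]])
    show "stopped_weight n0 m0 \<tau> \<in> borel_measurable M"
      by (rule stopped_weight_measurable[OF \<tau>])
    have "norm ((rh + muh) / (rho + mum)) = (rh + muh) / (rho + mum)"
      using abs_of_nonneg[OF fhat_bound_nonneg] by (simp only: real_norm_def)
    then show "AE \<omega> in M. norm (stopped_weight n0 m0 \<tau> \<omega>) \<le> norm ((rh + muh) / (rho + mum))"
      using stopped_weight_abs_le_AE[OF n0 m0] by simp
  qed
  ultimately show ?thesis
    unfolding payoff_affine by simp
qed

lemma VN_eq_SUP_affine:
  assumes "n0 \<le> N" "m0 \<in> {mum..muM}"
  shows "VN M B lam E U G th al sg rho nu K rh muh x n0 m0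
    = (SUP \<tau>\<in>{\<tau>. is_stopping_time M (filt M B lam E U G n0 m0) \<tau>}.
        ereal ((\<integral>\<omega>. payoff_slope n0 m0 \<tau> \<omega> \<partial>M) * x + - K * (\<integral>\<omega>. stopped_weight n0 m0 \<tau> \<omega> \<partial>M)))"
  unfolding VN_def
proof (intro SUP_cong refl)
  fix \<tau> assume "\<tau> \<in> {\<tau>. is_stopping_time M (filt M B lam E U G n0 m0) \<tau>}"
  then have "\<tau> \<in> borel_measurable M"
    by (auto intro: stopping_time_measurable)
  then show "ereal (\<integral>\<omega>. payoff M B lam E U G th al sg rho nu K rh muh x n0 m0 \<tau> \<omega> \<partial>M)
    = ereal ((\<integral>\<omega>. payoff_slope n0 m0 \<tau> \<omega> \<partial>M) * x + - K * (\<integral>\<omega>. stopped_weight n0 m0 \<tau> \<omega> \<partial>M))"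
    using assms by (simp add: expected_payoff_affine)
qed

lemma expected_coefficients_bounded:
  obtains L where
    "\<And>n0 m0 \<tau>. n0 \<le> N \<Longrightarrow> m0 \<in> {mum..muM} \<Longrightarrow> \<bar>\<integral>\<omega>. payoff_slope n0 m0 \<tau> \<omega> \<partial>M\<bar> \<le> L"
    "\<And>n0 m0 \<tau>. n0 \<le> N \<Longrightarrow> m0 \<in> {mum..muM} \<Longrightarrow>
      \<bar>- K * (\<integral>\<omega>. stopped_weight n0 m0 \<tau> \<omega> \<partial>M)\<bar> \<le> \<bar>K\<bar> * ((rh + muh) / (rho + mum))"
proof -
  obtain S where S: "integrable M S" "\<And>\<omega>. 0 \<le> S \<omega>"
    and dom: "\<And>n0 m0 \<tau>. n0 \<le> N \<Longrightarrow> m0 \<in> {mum..muM} \<Longrightarrow> AE \<omega> in M. \<bar>payoff_slope n0 m0 \<tau> \<omega>\<bar> \<le> S \<omega>"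
    using payoff_slope_dominated by blast
  show thesis
  proof (rule that[of "\<integral>\<omega>. S \<omega> \<partial>M"])
    fix n0 m0 \<tau> assume n0: "n0 \<le> N" and m0: "m0 \<in> {mum..muM}"
    have "\<bar>\<integral>\<omega>. payoff_slope n0 m0 \<tau> \<omega> \<partial>M\<bar> \<le> (\<integral>\<omega>. \<bar>payoff_slope n0 m0 \<tau> \<omega>\<bar> \<partial>M)"
      by (rule integral_abs_bound)
    also have "\<dots> \<le> (\<integral>\<omega>. S \<omega> \<partial>M)"
      using dom[OF n0 m0] S by (intro integral_mono_AE') (auto intro: AE_I2)
    finally show "\<bar>\<integral>\<omega>. payoff_slope n0 m0 \<tau> \<omega> \<partial>M\<bar> \<le> (\<integral>\<omega>. S \<omega> \<partial>M)" .
    have "\<bar>\<integral>\<omega>. stopped_weight n0 m0 \<tau> \<omega> \<partial>M\<bar> \<le> (\<integral>\<omega>. \<bar>stopped_weight n0 m0 \<tau> \<omega>\<bar> \<partial>M)"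
      by (rule integral_abs_bound)
    also have "\<dots> \<le> (\<integral>\<omega>. (rh + muh) / (rho + mum) \<partial>M)"
      using stopped_weight_abs_le_AE[OF n0 m0] fhat_bound_nonneg by (intro integral_mono_AE') auto
    also have "\<dots> = (rh + muh) / (rho + mum)"
      by (simp add: prob_space)
    finally show "\<bar>- K * (\<integral>\<omega>. stopped_weight n0 m0 \<tau> \<omega> \<partial>M)\<bar> \<le> \<bar>K\<bar> * ((rh + muh) / (rho + mum))"
      unfolding abs_mult abs_minus_cancel by (rule mult_left_mono) simp
  qed
qed

theorem VN_convex_lipschitz:
  shows "(\<forall>n\<le>N. \<forall>m\<in>{mum..muM}. \<forall>x y t. 0 < x \<longrightarrow> 0 < y \<longrightarrow> 0 \<le> t \<longrightarrow> t \<le> 1 \<longrightarrow>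
            VN M B lam E U G th al sg rho nu K rh muh (t * x + (1 - t) * y) n m
              \<le> ereal t * VN M B lam E U G th al sg rho nu K rh muh x n m
                + ereal (1 - t) * VN M B lam E U G th al sg rho nu K rh muh y n m)
       \<and> (\<exists>L>0. \<forall>n\<le>N. \<forall>m\<in>{mum..muM}. \<forall>x y. 0 < x \<longrightarrow> 0 < y \<longrightarrow>
            \<bar>VN M B lam E U G th al sg rho nu K rh muh x n m
              - VN M B lam E U G th al sg rho nu K rh muh y n m\<bar> \<le> ereal (L * \<bar>x - y\<bar>))"
proof
  show "\<forall>n\<le>N. \<forall>m\<in>{mum..muM}. \<forall>x y t. 0 < x \<longrightarrow> 0 < y \<longrightarrow> 0 \<le> t \<longrightarrow> t \<le> 1 \<longrightarrow>
      VN M B lam E U G th al sg rho nu K rh muh (t * x + (1 - t) * y) n m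
        \<le> ereal t * VN M B lam E U G th al sg rho nu K rh muh x n m
          + ereal (1 - t) * VN M B lam E U G th al sg rho nu K rh muh y n m"
  proof (intro allI ballI impI)
    fix n m and x y t :: real
    assume nm: "n \<le> N" "m \<in> {mum..muM}" and t: "0 \<le> t" "t \<le> 1"
    show "VN M B lam E U G th al sg rho nu K rh muh (t * x + (1 - t) * y) n m
        \<le> ereal t * VN M B lam E U G th al sg rho nu K rh muh x n m
          + ereal (1 - t) * VN M B lam E U G th al sg rho nu K rh muh y n m"
      unfolding VN_eq_SUP_affine[OF nm] using t by (rule SUP_affine_convex)
  qed
  obtain L where L: "\<And>n m \<tau>. n \<le> N \<Longrightarrow> m \<in> {mum..muM} \<Longrightarrow> \<bar>\<integral>\<omega>. payoff_slope n m \<tau> \<omega> \<partial>M\<bar> \<le> L"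
    and C: "\<And>n m \<tau>. n \<le> N \<Longrightarrow> m \<in> {mum..muM} \<Longrightarrow>
      \<bar>- K * (\<integral>\<omega>. stopped_weight n m \<tau> \<omega> \<partial>M)\<bar> \<le> \<bar>K\<bar> * ((rh + muh) / (rho + mum))"
    using expected_coefficients_bounded by blast
  have "\<bar>VN M B lam E U G th al sg rho nu K rh muh x n m - VN M B lam E U G th al sg rho nu K rh muh y n m\<bar>
      \<le> ereal ((\<bar>L\<bar> + 1) * \<bar>x - y\<bar>)" if nm: "n \<le> N" "m \<in> {mum..muM}" for n m x y
    unfolding VN_eq_SUP_affine[OF nm]
  proof (rule SUP_affine_lipschitz)
    show "{\<tau>. is_stopping_time M (filt M B lam E U G n m) \<tau>} \<noteq> {}"
      using infinity_is_stopping_time by blast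
    show "\<bar>\<integral>\<omega>. payoff_slope n m \<tau> \<omega> \<partial>M\<bar> \<le> \<bar>L\<bar> + 1" for \<tau>
      using L[OF nm, of \<tau>] abs_ge_self[of L] by linarith
    show "\<bar>- K * (\<integral>\<omega>. stopped_weight n m \<tau> \<omega> \<partial>M)\<bar> \<le> \<bar>K\<bar> * ((rh + muh) / (rho + mum))" for \<tau>
      by (rule C[OF nm])
  qed
  then show "\<exists>L>0. \<forall>n\<le>N. \<forall>m\<in>{mum..muM}. \<forall>x y. 0 < x \<longrightarrow> 0 < y \<longrightarrow>
      \<bar>VN M B lam E U G th al sg rho nu K rh muh x n m
        - VN M B lam E U G th al sg rho nu K rh muh y n m\<bar> \<le> ereal (L * \<bar>x - y\<bar>)"
    by (intro exI[of _ "\<bar>L\<bar> + 1"]) auto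
qed

end

theorem proposition5p2:
  fixes M :: "'a measure" and B :: "real \<Rightarrow> 'a \<Rightarrow> real"
    and E U :: "nat \<Rightarrow> 'a \<Rightarrow> real"
    and lam :: "nat \<Rightarrow> real" and N :: nat
    and q :: "nat \<Rightarrow> real \<Rightarrow> real measure"
    and G :: "nat \<Rightarrow> real \<Rightarrow> real \<Rightarrow> real"
    and \<theta> \<alpha> \<sigma> \<rho> \<nu> K \<rho>h \<mu>m \<mu>M \<mu>h :: real
  assumes M: "prob_space M"
    and BM: "std_BM M B"
    and E_exp: "\<And>j. distributed M lborel (E j) (\<lambda>y. ennreal (exponential_density 1 y))"
    and E_indep: "prob_space.indep_vars M (\<lambda>_. borel) E UNIV"
    and U_unif: "\<And>j. distributed M lborel (U j) (indicator {0..1})"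
    and U_indep: "prob_space.indep_vars M (\<lambda>_. borel) U UNIV"
    and BEU_indep: "prob_space.indep_sets M
          (\<lambda>i::nat. sigma_sets (space M) (gen_sets M
             (if i = 0 then {B t | t. 0 \<le> t} else if i = 1 then range E else range U))) {0, 1, 2}"
    and params: "\<theta> > 0" "\<alpha> \<ge> 0" "\<sigma> > 0" "\<rho> > 0" "0 \<le> \<nu>" "\<nu> \<le> 1" "\<rho>h > 0"
      "0 < \<mu>m" "\<mu>m \<le> \<mu>M" "\<mu>m \<le> \<mu>h" "\<mu>h \<le> \<mu>M" "\<theta> - \<alpha> - \<rho> - \<mu>m < 0"
    and lam_nonneg: "\<And>k. lam k \<ge> 0"
    and lam_zero: "\<And>k. k \<ge> N + 1 \<Longrightarrow> lam k = 0"
    and q_prob: "\<And>k m. k < N \<Longrightarrow> m \<in> {\<mu>m..\<mu>M} \<Longrightarrow>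
          prob_space (q k m) \<and> sets (q k m) = sets borel \<and> measure (q k m) {\<mu>m..\<mu>M} = 1"
    and q_meas: "\<And>k A. k < N \<Longrightarrow> A \<in> sets borel \<Longrightarrow>
          (\<lambda>m. measure (q k m) A) \<in> borel_measurable (restrict_space borel {\<mu>m..\<mu>M})"
    and G_meas: "\<And>k. (\<lambda>(m, u). G k m u) \<in> borel_measurable (borel \<Otimes>\<^sub>M borel)"
    and G_law: "\<And>k m. k < N \<Longrightarrow> m \<in> {\<mu>m..\<mu>M} \<Longrightarrow>
          distr (uniform_measure lborel {0..1}) borel (G k m) = q k m"
  shows "(\<forall>n\<le>N. \<forall>m\<in>{\<mu>m..\<mu>M}. \<forall>x y t. 0 < x \<longrightarrow> 0 < y \<longrightarrow> 0 \<le> t \<longrightarrow> t \<le> 1 \<longrightarrow>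
            VN M B lam E U G \<theta> \<alpha> \<sigma> \<rho> \<nu> K \<rho>h \<mu>h (t * x + (1 - t) * y) n m
              \<le> ereal t * VN M B lam E U G \<theta> \<alpha> \<sigma> \<rho> \<nu> K \<rho>h \<mu>h x n m
                + ereal (1 - t) * VN M B lam E U G \<theta> \<alpha> \<sigma> \<rho> \<nu> K \<rho>h \<mu>h y n m)
       \<and> (\<exists>L>0. \<forall>n\<le>N. \<forall>m\<in>{\<mu>m..\<mu>M}. \<forall>x y. 0 < x \<longrightarrow> 0 < y \<longrightarrow>
            \<bar>VN M B lam E U G \<theta> \<alpha> \<sigma> \<rho> \<nu> K \<rho>h \<mu>h x n m
              - VN M B lam E U G \<theta> \<alpha> \<sigma> \<rho> \<nu> K \<rho>h \<mu>h y n m\<bar> \<le> ereal (L * \<bar>x - y\<bar>))"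
proof -
  interpret stopping_problem M B lam E U G N \<mu>m \<mu>M q \<theta> \<alpha> \<sigma> \<rho> \<nu> K \<rho>h \<mu>h
    by (intro stopping_problem.intro std_brownian_motion.intro mortality_process.intro
        stopping_problem_axioms.intro std_brownian_motion_axioms.intro mortality_process_axioms.intro)
      (assumption | rule M BM E_exp U_unif U_indep lam_zero q_prob G_meas G_law params)+
  show ?thesis
    by (rule VN_convex_lipschitz)
qed

end
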